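(* For all integers $n\geq 3$ and $k\geq 0$, $$na_{n,k}=(k+1)a_{n-1,k}+(2n-4k)a_{n-1,k-1}+[k(k+2)+n-1]a_{n-2,k}+[(k-1)(4n-8k-14)+2n-8]a_{n-2,k-1}+4(n-2k)(n-2k+1)a_{n-2,k-2},$$ where $a_{m,j}=0$ if $j<0$ or $j>(m-1)/2$.
   Context: For a permutation $\pi=a_1\cdots a_m$ of $\{1,\ldots,m\}$, a descent is an index $1\le i\le m-1$ with $a_i>a_{i+1}$. An involution is a permutation $\pi$ with $\pi^2=\mathrm{id}$. Let $I_{m,j}$ be the number of involutions of $\{1,\ldots,m\}$ with exactly $j$ descents, and $I_m(t)=\sum_{j=0}^{m-1}I_{m,j}t^j$. For $m\geq1$ and $0\leq j\leq \lfloor (m-1)/2\rfloor$ define $$a_{m,j}=\sum_{i=0}^{j}(-1)^{j-i}\frac{m-2i-1}{m-j-i-1}\binom{m-j-i-1}{j-i}I_{m,i}\quad\text{if }2j+1<m,$$ $$a_{m,j}=I_{m,j}+\sum_{i=0}^{j-1}(-1)^{j-i}\frac{m-2i-1}{m-j-i-1}\binom{m-j-i-1}{j-i}I_{m,i}\quad\text{if }2j+1=m.$$ These are the coefficients satisfying $I_m(t)=\sum_{j=0}^{\lfloor (m-1)/2\rfloor}a_{m,j}t^j(1+t)^{m-2j-1}$. *)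

theory Defs
  imports Complex_Main "HOL-Combinatorics.Permutations"
begin

definition descents :: "nat \<Rightarrow> (nat \<Rightarrow> nat) \<Rightarrow> nat set" where
  "descents m p = {i \<in> {1..m-1}. p i > p (Suc i)}"

definition involutions :: "nat \<Rightarrow> (nat \<Rightarrow> nat) set" where
  "involutions m = {p. p permutes {1..m} \<and> p \<circ> p = id}"

definition Inv :: "nat \<Rightarrow> nat \<Rightarrow> nat" where
  "Inv m j = card {p \<in> involutions m. card (descents m p) = j}"

definition term_a :: "nat \<Rightarrow> nat \<Rightarrow> nat \<Rightarrow> rat" where
  "term_a m j i = (-1) ^ (j - i) * (of_nat (m - 2*i - 1) / of_nat (m - j - i - 1))
      * of_nat ((m - j - i - 1) choose (j - i)) * of_nat (Inv m i)"

definition a_nat :: "nat \<Rightarrow> nat \<Rightarrow> rat" where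
  "a_nat m j =
     (if 2*j + 1 < m then (\<Sum>i\<in>{0..j}. term_a m j i)
      else if 2*j + 1 = m then of_nat (Inv m j) + (\<Sum>i\<in>{0..<j}. term_a m j i)
      else 0)"

definition a :: "nat \<Rightarrow> int \<Rightarrow> rat" where
  "a m j = (if j < 0 then 0 else a_nat m (nat j))"

end

(*
  Let T(n, r) count the pairs (w, p) of a weakly increasing word w of length n over {0..<r}
  and an involution p of {1..n} all of whose descents are strict ascents of w.

  Summing over p first gives T(n, r) = sum_k I_{n,k} binomial(r + n - 1 - k, n), that is,
  sum_r T(n, r + 1) x^r = I_n(x) / (1 - x)^(n + 1).

  Summing over w first, p becomes an involution of the letters of w that is increasing on every
  block of equal letters.  Splitting off the largest letter shows that
  sum_n T(n, r) x^n = 1 / ((1 - x)^r (1 - x^2)^(r (r - 1) / 2)); this series G satisfies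
  (1 - x^2) G' = (r + r^2 x) G, so (n + 2) T(n + 2, r) = r T(n + 1, r) + (r^2 + n) T(n, r).

  In terms of I_n this becomes a three-term recurrence involving the operator
  G |-> (1 - x) (G + x G') + m x G.  The gamma expansion with coefficients defined by the
  recurrence of the theorem satisfies the same recurrence and initial values, so it is I_n.
  Finally, the formula defining a_{m,j} inverts the gamma expansion, so a is that coefficient
  sequence.
*)

theory Submission
  imports Defs "HOL-Library.Product_Lexorder" "HOL-Library.Multiset"
    "HOL-Computational_Algebra.Formal_Power_Series"
begin

unbundle fps_syntax

section \<open>Involutions of the positions of a multiset\<close>

definition involution_on :: "'a set \<Rightarrow> ('a \<Rightarrow> 'a) \<Rightarrow> bool" where
  "involution_on S p \<longleftrightarrow> (\<forall>x. x \<notin> S \<longrightarrow> p x = x) \<and> (\<forall>x. p (p x) = x)"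

lemma involution_onI:
  "(\<And>x. x \<notin> S \<Longrightarrow> p x = x) \<Longrightarrow> (\<And>x. p (p x) = x) \<Longrightarrow> involution_on S p"
  unfolding involution_on_def by blast

lemma involution_onD:
  assumes "involution_on S p"
  shows "x \<notin> S \<Longrightarrow> p x = x" and "p (p x) = x" and "x \<in> S \<Longrightarrow> p x \<in> S"
proof -
  show outside: "p x = x" if "x \<notin> S" for x
    using assms that unfolding involution_on_def by blast
  show involutive: "p (p x) = x" for x
    using assms unfolding involution_on_def by blast
  show "p x \<in> S" if "x \<in> S"
  proof (rule ccontr)
    assume "p x \<notin> S"
    then have "x = p x" using involutive[of x] outside[of "p x"] by simp
    with \<open>x \<in> S\<close> \<open>p x \<notin> S\<close> show False by simp
  qed
qed

lemma involution_on_mono: "involution_on S p \<Longrightarrow> S \<subseteq> T \<Longrightarrow> involution_on T p"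
  unfolding involution_on_def by blast

lemma involution_on_iff_permutes: "involution_on S p \<longleftrightarrow> p permutes S \<and> p \<circ> p = id"
proof
  assume p: "involution_on S p"
  have "\<exists>!x. p x = y" for y
  proof (rule ex1I)
    show "p (p y) = y" by (rule involution_onD(2)[OF p])
    show "x = p y" if "p x = y" for x
      using that involution_onD(2)[OF p, of x] by simp
  qed
  with involution_onD(1)[OF p] have "p permutes S"
    unfolding permutes_def by blast
  then show "p permutes S \<and> p \<circ> p = id"
    using involution_onD(2)[OF p] by (simp add: fun_eq_iff)
next
  assume "p permutes S \<and> p \<circ> p = id"
  then show "involution_on S p"
    unfolding involution_on_def by (auto simp: permutes_not_in fun_eq_iff)
qed

text \<open>
  A multiset \<open>M\<close> of letters is laid out on the positions \<open>(u, i)\<close>, \<open>i < count M u\<close>,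
  ordered lexicographically; the positions carrying the letter \<open>u\<close> form the block of \<open>u\<close>.
\<close>

definition positions :: "nat multiset \<Rightarrow> (nat \<times> nat) set" where
  "positions M = {(u, i). i < count M u}"

definition increasing_on_blocks :: "nat multiset \<Rightarrow> (nat \<times> nat \<Rightarrow> nat \<times> nat) \<Rightarrow> bool" where
  "increasing_on_blocks M p \<longleftrightarrow> (\<forall>u i j. i < j \<longrightarrow> j < count M u \<longrightarrow> p (u, i) < p (u, j))"

definition block_involutions :: "nat multiset \<Rightarrow> (nat \<times> nat \<Rightarrow> nat \<times> nat) set" where
  "block_involutions M = {p. involution_on (positions M) p \<and> increasing_on_blocks M p}"

definition block_involutions_below ::
    "nat multiset \<Rightarrow> nat \<Rightarrow> nat \<Rightarrow> (nat \<times> nat \<Rightarrow> nat \<times> nat) set" where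
  "block_involutions_below M v t = {p \<in> block_involutions M. \<forall>i < count M v. fst (p (v, i)) < t}"

lemma less_count_imp_in: "i < count M u \<Longrightarrow> u \<in># M"
  by (rule count_inI) simp

lemma mem_positions [simp]: "x \<in> positions M \<longleftrightarrow> snd x < count M (fst x)"
  by (cases x) (simp add: positions_def)

lemma positions_add_mset: "positions (add_mset x M) = insert (x, count M x) (positions M)"
  by (auto simp: positions_def less_Suc_eq split: if_splits)

lemma finite_positions: "finite (positions M)"
  by (induction M) (simp_all add: positions_add_mset, simp add: positions_def)

lemma card_positions: "card (positions M) = size M"
  by (induction M) (simp_all add: positions_add_mset finite_positions, simp add: positions_def)

lemma finite_block_involutions: "finite (block_involutions M)"
proof -
  have "block_involutions M \<subseteq> {p. p permutes positions M}"
    by (auto simp: block_involutions_def involution_on_iff_permutes)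
  then show ?thesis using finite_permutations[OF finite_positions] by (rule finite_subset)
qed

lemma block_involutions_empty: "block_involutions {#} = {id}"
proof -
  have "positions {#} = {}" by (simp add: positions_def)
  then have "involution_on (positions {#}) p \<longleftrightarrow> p = id" for p
    by (auto simp: involution_on_def fun_eq_iff)
  then show ?thesis by (auto simp: block_involutions_def increasing_on_blocks_def)
qed

lemma block_involutions_below_absent: "v \<notin># M \<Longrightarrow> block_involutions_below M v t = block_involutions M"
  by (auto simp: block_involutions_below_def dest: less_count_imp_in)

lemma less_eq_prod_fst: "(x :: 'a::preorder \<times> 'b::ord) \<le> y \<Longrightarrow> fst x \<le> fst y"
  by (auto simp: less_eq_prod_def less_imp_le)

lemma positions_le_last:
  assumes "\<forall>x\<in>#M. x \<le> v" and "x \<in> positions M"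
  shows "x \<le> (v, count M v - 1)"
proof -
  obtain b i where x: "x = (b, i)" by (cases x)
  with assms(2) have i: "i < count M b" by simp
  then have "b \<in># M" by (rule less_count_imp_in)
  with assms(1) have "b \<le> v" by blast
  then show ?thesis
    unfolding x using i by (cases "b = v") simp_all
qed

lemma positions_remove_last:
  assumes "v \<in># M"
  shows "positions (M - {#v#}) = positions M - {(v, count M v - 1)}"
  using assms by (auto simp: positions_def split: if_splits dest: less_count_imp_in)

lemma increasing_on_blocks_add_last:
  assumes top: "\<forall>x\<in>#M. x \<le> v" and v: "v \<in># M"
    and inv: "involution_on (positions (M - {#v#})) p" and inc: "increasing_on_blocks (M - {#v#}) p"
  shows "increasing_on_blocks M p"
  unfolding increasing_on_blocks_def
proof (intro allI impI)
  define m where "m = (v, count M v - 1)"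
  have pos: "positions (M - {#v#}) = positions M - {m}"
    using positions_remove_last[OF v] by (simp add: m_def)
  fix u i j assume ij: "i < j" "j < count M u"
  show "p (u, i) < p (u, j)"
  proof (cases "(u, j) = m")
    case True
    then have "(u, i) \<in> positions M - {m}" using ij by (auto simp: m_def)
    then have "p (u, i) \<in> positions M - {m}" using involution_onD(3)[OF inv] by (simp add: pos)
    moreover have "p m = m" using involution_onD(1)[OF inv] by (simp add: pos)
    ultimately show ?thesis
      using True positions_le_last[OF top, of "p (u, i)"] by (auto simp: m_def order.strict_iff_order)
  next
    case False
    then have "j < count (M - {#v#}) u" using ij by (auto simp: m_def)
    then show ?thesis using inc ij(1) by (simp add: increasing_on_blocks_def)
  qed
qed

lemma block_involutions_fixing_last:
  assumes top: "\<forall>x\<in>#M. x \<le> v" and v: "v \<in># M"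
  shows "{p \<in> block_involutions M. p (v, count M v - 1) = (v, count M v - 1)}
       = block_involutions (M - {#v#})"
proof -
  define m where "m = (v, count M v - 1)"
  have pos: "positions (M - {#v#}) = positions M - {m}"
    using positions_remove_last[OF v] by (simp add: m_def)
  have "p \<in> block_involutions (M - {#v#}) \<longleftrightarrow> p \<in> block_involutions M \<and> p m = m" for p
  proof
    assume p: "p \<in> block_involutions M \<and> p m = m"
    then have "involution_on (positions (M - {#v#})) p"
      by (auto simp: pos block_involutions_def involution_on_def)
    moreover have "increasing_on_blocks (M - {#v#}) p"
      using p by (auto simp: block_involutions_def increasing_on_blocks_def split: if_splits)
    ultimately show "p \<in> block_involutions (M - {#v#})"
      by (simp add: block_involutions_def)
  next
    assume p: "p \<in> block_involutions (M - {#v#})"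
    then have inv: "involution_on (positions M - {m}) p"
      by (simp add: block_involutions_def pos)
    then have "p m = m" by (simp add: involution_onD(1))
    then show "p \<in> block_involutions M \<and> p m = m"
      using increasing_on_blocks_add_last[OF top v] p involution_on_mono[OF inv]
      by (auto simp: block_involutions_def)
  qed
  then show ?thesis unfolding m_def by blast
qed

lemma block_involutions_moving_last:
  assumes top: "\<forall>x\<in>#M. x \<le> v" and v: "v \<in># M"
  shows "{p \<in> block_involutions M. p (v, count M v - 1) \<noteq> (v, count M v - 1)}
       = block_involutions_below M v v"
proof (intro set_eqI iffI)
  define m where "m = (v, count M v - 1)"
  have m: "m \<in> positions M" using v by (simp add: m_def)
  have m_max: "x \<le> m" if "x \<in> positions M" for x
    using positions_le_last[OF top that] by (simp add: m_def)
  fix p assume "p \<in> {p \<in> block_involutions M. p (v, count M v - 1) \<noteq> (v, count M v - 1)}"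
  then have p: "p \<in> block_involutions M" "p m \<noteq> m" by (auto simp: m_def)
  then have inv: "involution_on (positions M) p" and inc: "increasing_on_blocks M p"
    by (auto simp: block_involutions_def)
  have pm: "p m \<in> positions M" using involution_onD(3)[OF inv m] .
  have "fst (p m) < v"
  proof (rule ccontr)
    assume "\<not> fst (p m) < v"
    moreover have "fst (p m) \<le> v"
      using m_max[OF pm] by (cases "p m") (auto simp: m_def)
    ultimately obtain i where pmi: "p m = (v, i)" by (cases "p m") auto
    with pm p(2) have "i < count M v - 1" by (auto simp: m_def)
    then have "p (v, i) < p m" using inc unfolding increasing_on_blocks_def m_def by auto
    moreover have "p (v, i) = m" using involution_onD(2)[OF inv, of m] pmi by simp
    ultimately show False using m_max[OF pm] by simp
  qed
  moreover have "p (v, i) \<le> p m" if "i < count M v" for i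
    using inc that unfolding increasing_on_blocks_def m_def
    by (cases "i = count M v - 1") (auto intro: less_imp_le)
  ultimately have "fst (p (v, i)) < v" if "i < count M v" for i
    using that less_eq_prod_fst le_less_trans by blast
  then show "p \<in> block_involutions_below M v v"
    using p(1) by (simp add: block_involutions_below_def)
next
  fix p assume "p \<in> block_involutions_below M v v"
  then have "p \<in> block_involutions M" "fst (p (v, count M v - 1)) < v"
    using v by (auto simp: block_involutions_below_def)
  then show "p \<in> {p \<in> block_involutions M. p (v, count M v - 1) \<noteq> (v, count M v - 1)}"
    by auto
qed

lemma card_block_involutions_remove_max:
  assumes "\<forall>x\<in>#M. x \<le> v" and "v \<in># M"
  shows "card (block_involutions M)
       = card (block_involutions (M - {#v#})) + card (block_involutions_below M v v)"
proof -
  let ?m = "(v, count M v - 1)"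
  have "card (block_involutions M)
      = card (block_involutions M \<inter> {p. p ?m = ?m}) + card (block_involutions M - {p. p ?m = ?m})"
    using finite_block_involutions by (rule card_Int_Diff)
  also have "block_involutions M \<inter> {p. p ?m = ?m} = {p \<in> block_involutions M. p ?m = ?m}"
    by blast
  also have "block_involutions M - {p. p ?m = ?m} = {p \<in> block_involutions M. p ?m \<noteq> ?m}"
    by blast
  finally show ?thesis
    unfolding block_involutions_fixing_last[OF assms] block_involutions_moving_last[OF assms] .
qed

text \<open>
  If the block of the largest letter \<open>v\<close> is sent below \<open>t\<close>, its last position is paired with
  the last position of some block \<open>u < t\<close>; removing this pair leaves the rest of the block of
  \<open>v\<close> sent below \<open>u + 1\<close>.
\<close>

context
  fixes M :: "nat multiset" and u v t :: nat
  assumes top: "\<forall>x\<in>#M. x \<le> v" and v_in: "v \<in># M" and u_in: "u \<in># M"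
    and u_less: "u < t" and t_le: "t \<le> v"
begin

lemma last_positions_distinct: "(v, count M v - 1) \<noteq> (u, count M u - 1)"
  using u_less t_le by simp

lemma positions_remove_pair:
  "positions (M - {#u#} - {#v#}) = positions M - {(v, count M v - 1), (u, count M u - 1)}"
  using u_in v_in u_less t_le
  by (auto simp: positions_def split: if_splits dest: less_count_imp_in)

lemma block_involutions_below_unpair:
  assumes p: "p \<in> block_involutions_below M v t" and pm: "p (v, count M v - 1) = (u, count M u - 1)"
  shows "(\<lambda>x. if x = (v, count M v - 1) \<or> x = (u, count M u - 1) then x else p x)
           \<in> block_involutions_below (M - {#u#} - {#v#}) v (Suc u)"
    (is "?q \<in> _")
proof -
  define m j M' where "m = (v, count M v - 1)" and "j = (u, count M u - 1)"
    and "M' = M - {#u#} - {#v#}"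
  have pos: "positions M' = positions M - {m, j}"
    using positions_remove_pair by (simp add: M'_def m_def j_def)
  from p have inv: "involution_on (positions M) p" and inc: "increasing_on_blocks M p"
    by (auto simp: block_involutions_below_def block_involutions_def)
  have pm': "p m = j" "p j = m"
    using pm involution_onD(2)[OF inv, of m] by (simp_all add: m_def j_def)
  have "involution_on (positions M') ?q"
  proof (rule involution_onI)
    fix x assume "x \<notin> positions M'"
    then show "?q x = x" using involution_onD(1)[OF inv, of x] by (auto simp: pos m_def j_def)
  next
    fix x
    have "p x \<noteq> m \<and> p x \<noteq> j" if "x \<noteq> m" "x \<noteq> j"
      using that pm' involution_onD(2)[OF inv, of x] by metis
    then show "?q (?q x) = x"
      using involution_onD(2)[OF inv, of x] by (auto simp: m_def j_def)
  qed
  moreover have "increasing_on_blocks M' ?q"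
    unfolding increasing_on_blocks_def
  proof (intro allI impI)
    fix w i k assume ik: "i < k" "k < count M' w"
    then have "(w, i) \<notin> {m, j}" "(w, k) \<notin> {m, j}" "k < count M w"
      using pos mem_positions[of "(w, i)" M'] mem_positions[of "(w, k)" M']
      by (auto simp: M'_def split: if_splits)
    then show "?q (w, i) < ?q (w, k)"
      using inc ik(1) by (auto simp: increasing_on_blocks_def m_def j_def)
  qed
  moreover have "fst (?q (v, i)) < Suc u" if i: "i < count M' v" for i
  proof -
    have ic: "i < count M v - 1" using i u_less t_le by (simp add: M'_def)
    then have "?q (v, i) = p (v, i)" using u_less t_le by auto
    moreover have "p (v, i) < p m" using inc ic unfolding increasing_on_blocks_def m_def by auto
    ultimately have "?q (v, i) \<le> j" using pm'(1) by simp
    then show ?thesis using less_eq_prod_fst[of "?q (v, i)" j] by (simp add: j_def)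
  qed
  ultimately show ?thesis
    by (simp add: block_involutions_below_def block_involutions_def M'_def)
qed

lemma increasing_on_blocks_pair:
  assumes q: "q \<in> block_involutions_below (M - {#u#} - {#v#}) v (Suc u)"
  shows "increasing_on_blocks M (\<lambda>x. if x = (v, count M v - 1) then (u, count M u - 1)
              else if x = (u, count M u - 1) then (v, count M v - 1) else q x)"
    (is "increasing_on_blocks M ?p")
  unfolding increasing_on_blocks_def
proof (intro allI impI)
  define m j M' where "m = (v, count M v - 1)" and "j = (u, count M u - 1)"
    and "M' = M - {#u#} - {#v#}"
  have pos: "positions M' = positions M - {m, j}"
    using positions_remove_pair by (simp add: M'_def m_def j_def)
  from q have inv: "involution_on (positions M') q" and inc: "increasing_on_blocks M' q"
    and below: "\<forall>i < count M' v. fst (q (v, i)) < Suc u"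
    by (auto simp: block_involutions_below_def block_involutions_def M'_def)
  fix w i k assume ik: "i < k" "k < count M w"
  have wi: "(w, i) \<in> positions M'" using ik by (auto simp: pos m_def j_def)
  then have q_wi: "q (w, i) \<in> positions M - {m, j}" using involution_onD(3)[OF inv] pos by auto
  have "q (w, i) < q (w, k)" if "(w, k) \<noteq> m" "(w, k) \<noteq> j"
  proof -
    have "(w, k) \<in> positions M'" using that ik by (simp add: pos)
    then show ?thesis using inc ik(1) by (simp add: increasing_on_blocks_def)
  qed
  moreover have "q (w, i) < j" if "(w, k) = m"
  proof -
    have "w = v" using that by (simp add: m_def)
    with wi have "i < count M' v" by simp
    with below have "fst (q (v, i)) \<le> u" by auto
    moreover have "q (v, i) \<in> positions M'" using q_wi \<open>w = v\<close> pos by auto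
    ultimately show ?thesis using \<open>w = v\<close> u_less t_le
      by (cases "q (v, i)") (auto simp: j_def M'_def le_less)
  qed
  moreover have "q (w, i) < m"
    using q_wi positions_le_last[OF top, of "q (w, i)"] by (auto simp: m_def order.strict_iff_order)
  moreover have "?p (w, i) = q (w, i)" using wi by (auto simp: pos m_def j_def)
  ultimately show "?p (w, i) < ?p (w, k)"
    using last_positions_distinct by (auto simp: m_def j_def)
qed

lemma block_involutions_below_pair:
  assumes q: "q \<in> block_involutions_below (M - {#u#} - {#v#}) v (Suc u)"
  shows "(\<lambda>x. if x = (v, count M v - 1) then (u, count M u - 1)
              else if x = (u, count M u - 1) then (v, count M v - 1) else q x)
           \<in> block_involutions_below M v t"
    (is "?p \<in> _")
proof -
  define m j M' where "m = (v, count M v - 1)" and "j = (u, count M u - 1)"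
    and "M' = M - {#u#} - {#v#}"
  have pos: "positions M' = positions M - {m, j}"
    using positions_remove_pair by (simp add: M'_def m_def j_def)
  from q have inv: "involution_on (positions M') q"
    and below: "\<forall>i < count M' v. fst (q (v, i)) < Suc u"
    by (auto simp: block_involutions_below_def block_involutions_def M'_def)
  have "involution_on (positions M) ?p"
  proof (rule involution_onI)
    fix x assume "x \<notin> positions M"
    then have "x \<notin> positions M'" "x \<noteq> m" "x \<noteq> j"
      using v_in u_in by (auto simp: pos m_def j_def)
    then show "?p x = x" using involution_onD(1)[OF inv] by (simp add: m_def j_def)
  next
    fix x
    have "q x \<noteq> m \<and> q x \<noteq> j" if "x \<noteq> m" "x \<noteq> j"
      using that involution_onD(1,3)[OF inv, of x] by (cases "x \<in> positions M'") (auto simp: pos)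
    then show "?p (?p x) = x"
      using last_positions_distinct involution_onD(2)[OF inv, of x] by (auto simp: m_def j_def)
  qed
  moreover have "fst (?p (v, i)) < t" if i: "i < count M v" for i
  proof (cases "i = count M v - 1")
    case True
    then show ?thesis using u_less by simp
  next
    case False
    then have "(v, i) \<noteq> m" "(v, i) \<noteq> j" "i < count M' v"
      using u_less t_le i by (auto simp: m_def j_def M'_def)
    then show ?thesis using below u_less t_le by (auto simp: m_def j_def)
  qed
  ultimately show ?thesis
    using increasing_on_blocks_pair[OF q] by (simp add: block_involutions_below_def block_involutions_def)
qed

lemma card_block_involutions_below_pair_with:
  "card {p \<in> block_involutions_below M v t. p (v, count M v - 1) = (u, count M u - 1)}
     = card (block_involutions_below (M - {#u#} - {#v#}) v (Suc u))"
    (is "card ?S = card ?T")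
proof -
  let ?m = "(v, count M v - 1)" and ?j = "(u, count M u - 1)"
  define f where "f p = (\<lambda>x. if x = ?m \<or> x = ?j then x else p x)"
    for p :: "nat \<times> nat \<Rightarrow> nat \<times> nat"
  define g where "g q = (\<lambda>x. if x = ?m then ?j else if x = ?j then ?m else q x)"
    for q :: "nat \<times> nat \<Rightarrow> nat \<times> nat"
  have "bij_betw f ?S ?T"
  proof (rule bij_betw_byWitness[where f' = g])
    show "\<forall>p\<in>?S. g (f p) = p"
    proof
      fix p assume "p \<in> ?S"
      then have "p ?m = ?j" "p ?j = ?m"
        using involution_onD(2)[of "positions M" p ?m]
        by (auto simp: block_involutions_below_def block_involutions_def)
      then show "g (f p) = p" by (auto simp: fun_eq_iff f_def g_def)
    qed
    show "\<forall>q\<in>?T. f (g q) = q"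
    proof
      fix q assume "q \<in> ?T"
      then have "involution_on (positions (M - {#u#} - {#v#})) q"
        by (simp add: block_involutions_below_def block_involutions_def)
      then have "involution_on (positions M - {?m, ?j}) q"
        unfolding positions_remove_pair .
      then have "q ?m = ?m" "q ?j = ?j" by (simp_all add: involution_onD(1))
      then show "f (g q) = q" using last_positions_distinct by (auto simp: fun_eq_iff f_def g_def)
    qed
    show "f ` ?S \<subseteq> ?T"
      using block_involutions_below_unpair unfolding f_def by blast
    show "g ` ?T \<subseteq> ?S"
      using block_involutions_below_pair unfolding g_def by auto
  qed
  then show ?thesis by (rule bij_betw_same_card)
qed

end

lemma block_involutions_below_partner:
  assumes top: "\<forall>x\<in>#M. x \<le> v" and v: "v \<in># M"
    and p: "p \<in> block_involutions_below M v t"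
  obtains u where "u < t" "u \<in># M" "p (v, count M v - 1) = (u, count M u - 1)"
proof -
  define m where "m = (v, count M v - 1)"
  have m: "m \<in> positions M" using v by (simp add: m_def)
  have m_max: "x \<le> m" if "x \<in> positions M" for x
    using positions_le_last[OF top that] by (simp add: m_def)
  from p have inv: "involution_on (positions M) p" and inc: "increasing_on_blocks M p"
    and below: "\<forall>i < count M v. fst (p (v, i)) < t"
    by (auto simp: block_involutions_below_def block_involutions_def)
  obtain u k where uk: "p m = (u, k)" by (cases "p m")
  have "p m \<in> positions M" using involution_onD(3)[OF inv m] .
  then have k: "k < count M u" using uk by simp
  have "u < t" using below[rule_format, of "count M v - 1"] v uk by (simp add: m_def)
  moreover have "u \<in># M" using k by (rule less_count_imp_in)
  moreover have "k = count M u - 1"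
  proof (rule ccontr)
    assume "k \<noteq> count M u - 1"
    with k have "p (u, k) < p (u, count M u - 1)"
      using inc unfolding increasing_on_blocks_def by auto
    moreover have "p (u, k) = m" using involution_onD(2)[OF inv, of m] uk by simp
    moreover have "p (u, count M u - 1) \<in> positions M"
      using involution_onD(3)[OF inv] k by simp
    ultimately show False using m_max by (meson leD)
  qed
  ultimately show ?thesis using that uk by (simp add: m_def)
qed

lemma card_block_involutions_below_decomp:
  assumes top: "\<forall>x\<in>#M. x \<le> v" and v: "v \<in># M" and tv: "t \<le> v"
  shows "card (block_involutions_below M v t)
       = (\<Sum>u\<in>{u. u < t \<and> u \<in># M}. card (block_involutions_below (M - {#u#} - {#v#}) v (Suc u)))"
proof -
  define S where "S u = {p \<in> block_involutions_below M v t. p (v, count M v - 1) = (u, count M u - 1)}"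
    for u
  have "block_involutions_below M v t = (\<Union>u\<in>{u. u < t \<and> u \<in># M}. S u)"
    using block_involutions_below_partner[OF top v] by (auto simp: S_def) blast
  then have "card (block_involutions_below M v t) = (\<Sum>u\<in>{u. u < t \<and> u \<in># M}. card (S u))"
    by (simp only:, intro card_UN_disjoint)
      (auto simp: S_def block_involutions_below_def intro: finite_subset[OF _ finite_block_involutions])
  also have "\<dots> = (\<Sum>u\<in>{u. u < t \<and> u \<in># M}. card (block_involutions_below (M - {#u#} - {#v#}) v (Suc u)))"
    using card_block_involutions_below_pair_with[OF top v _ _ tv] by (auto simp: S_def intro: sum.cong)
  finally show ?thesis .
qed

section \<open>Counting block involutions of bounded multisets\<close>

definition block_inv_count :: "nat \<Rightarrow> nat \<Rightarrow> nat" where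
  "block_inv_count n r = (\<Sum>M\<in>multisets_of_size {..<r} n. card (block_involutions M))"

definition block_inv_count_top :: "nat \<Rightarrow> nat \<Rightarrow> nat \<Rightarrow> nat" where
  "block_inv_count_top r m p =
     (\<Sum>M\<in>multisets_of_size {..<r} m. card (block_involutions (M + replicate_mset p r)))"

definition block_inv_count_top_below :: "nat \<Rightarrow> nat \<Rightarrow> nat \<Rightarrow> nat \<Rightarrow> nat" where
  "block_inv_count_top_below r m q t =
     (\<Sum>M\<in>multisets_of_size {..<r} m. card (block_involutions_below (M + replicate_mset q r) r t))"

lemma block_inv_count_zero_letters: "block_inv_count n 0 = (if n = 0 then 1 else 0)"
proof -
  have "multisets_of_size {..<0::nat} n = (if n = 0 then {{#}} else {})"
    by (auto simp: multisets_of_size_def)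
  then show ?thesis by (simp add: block_inv_count_def block_involutions_empty)
qed

lemma multisets_of_size_lessThan_Suc:
  "multisets_of_size {..<Suc r} n
     = (\<Union>p\<le>n. (\<lambda>M. M + replicate_mset p r) ` multisets_of_size {..<r} (n - p))"
proof (intro set_eqI iffI)
  fix M assume M: "M \<in> multisets_of_size {..<Suc r} n"
  define p where "p = count M r"
  define M' where "M' = filter_mset (\<lambda>x. x < r) M"
  have eq: "M = M' + replicate_mset p r"
  proof (rule multiset_eqI)
    fix x
    have "x \<le> r" if "x \<in># M" using M that by (auto simp: multisets_of_size_def)
    then show "count M x = count (M' + replicate_mset p r) x"
      by (cases "x < r") (auto simp: M'_def p_def count_eq_zero_iff)
  qed
  then have "size M = size M' + p" by simp
  then have "p \<le> n" "M' \<in> multisets_of_size {..<r} (n - p)"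
    using M by (auto simp: multisets_of_size_def M'_def)
  then show "M \<in> (\<Union>p\<le>n. (\<lambda>M. M + replicate_mset p r) ` multisets_of_size {..<r} (n - p))"
    using eq by blast
next
  fix M assume "M \<in> (\<Union>p\<le>n. (\<lambda>M. M + replicate_mset p r) ` multisets_of_size {..<r} (n - p))"
  then show "M \<in> multisets_of_size {..<Suc r} n"
    by (auto simp: multisets_of_size_def split: if_splits)
qed

lemma block_inv_count_Suc_letters: "block_inv_count n (Suc r) = (\<Sum>p\<le>n. block_inv_count_top r (n - p) p)"
proof -
  let ?A = "\<lambda>p. (\<lambda>M. M + replicate_mset p r) ` multisets_of_size {..<r} (n - p)"
  have top: "count M r = 0" if "M \<in> multisets_of_size {..<r} m" for M m
    using that by (auto simp: multisets_of_size_def count_eq_zero_iff)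
  have "?A p \<inter> ?A q = {}" if "p \<noteq> q" for p q
  proof -
    have "M + replicate_mset p r \<noteq> M' + replicate_mset q r"
      if "M \<in> multisets_of_size {..<r} (n - p)" "M' \<in> multisets_of_size {..<r} (n - q)" for M M'
      using top[OF that(1)] top[OF that(2)] \<open>p \<noteq> q\<close>
      by (metis add_0 count_replicate_mset count_union)
    then show ?thesis by blast
  qed
  then have "block_inv_count n (Suc r) = (\<Sum>p\<le>n. \<Sum>M\<in>?A p. card (block_involutions M))"
    unfolding block_inv_count_def multisets_of_size_lessThan_Suc
    by (intro sum.UNION_disjoint) auto
  also have "\<dots> = (\<Sum>p\<le>n. block_inv_count_top r (n - p) p)"
    unfolding block_inv_count_top_def by (intro sum.cong refl sum.reindex_cong[OF _ refl]) (auto simp: inj_on_def)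
  finally show ?thesis .
qed

lemma block_inv_count_top_0: "block_inv_count_top r m 0 = block_inv_count m r"
  by (simp add: block_inv_count_top_def block_inv_count_def)

lemma block_inv_count_top_below_0: "block_inv_count_top_below r m 0 t = block_inv_count m r"
  unfolding block_inv_count_top_below_def block_inv_count_def
  by (intro sum.cong refl, subst block_involutions_below_absent) (auto simp: multisets_of_size_def)

lemma block_inv_count_top_Suc:
  "block_inv_count_top r m (Suc p) = block_inv_count_top r m p + block_inv_count_top_below r m (Suc p) r"
proof -
  have "card (block_involutions (M + replicate_mset (Suc p) r))
      = card (block_involutions (M + replicate_mset p r))
        + card (block_involutions_below (M + replicate_mset (Suc p) r) r r)"
    if "M \<in> multisets_of_size {..<r} m" for M
  proof -
    have "\<forall>x\<in>#M + replicate_mset (Suc p) r. x \<le> r"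
      using that by (auto simp: multisets_of_size_def)
    from card_block_involutions_remove_max[OF this] show ?thesis by simp
  qed
  then show ?thesis by (simp add: block_inv_count_top_def block_inv_count_top_below_def sum.distrib)
qed

lemma card_block_involutions_below_add_top:
  assumes M: "\<forall>x\<in>#M. x < r" and tr: "t \<le> r"
  shows "card (block_involutions_below (M + replicate_mset (Suc q) r) r t)
       = (\<Sum>u<t. if u \<in># M
                 then card (block_involutions_below ((M - {#u#}) + replicate_mset q r) r (Suc u))
                 else 0)"
proof -
  have top: "\<forall>x\<in>#M + replicate_mset (Suc q) r. x \<le> r" using M by auto
  have "card (block_involutions_below (M + replicate_mset (Suc q) r) r t)
      = (\<Sum>u\<in>{u. u < t \<and> u \<in># M + replicate_mset (Suc q) r}.
           card (block_involutions_below (M + replicate_mset (Suc q) r - {#u#} - {#r#}) r (Suc u)))"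
    by (rule card_block_involutions_below_decomp[OF top _ tr]) simp
  also have "\<dots> = (\<Sum>u\<in>{u \<in> {..<t}. u \<in># M}.
      card (block_involutions_below ((M - {#u#}) + replicate_mset q r) r (Suc u)))"
  proof (rule sum.cong)
    show "{u. u < t \<and> u \<in># M + replicate_mset (Suc q) r} = {u \<in> {..<t}. u \<in># M}"
      using tr by auto
    fix u assume "u \<in> {u \<in> {..<t}. u \<in># M}"
    then have "M + replicate_mset (Suc q) r - {#u#} - {#r#} = (M - {#u#}) + replicate_mset q r"
      using tr by (auto simp: multiset_eq_iff)
    then show "card (block_involutions_below (M + replicate_mset (Suc q) r - {#u#} - {#r#}) r (Suc u))
        = card (block_involutions_below ((M - {#u#}) + replicate_mset q r) r (Suc u))"
      by simp
  qed
  also have "\<dots> = (\<Sum>u<t. if u \<in># M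
      then card (block_involutions_below ((M - {#u#}) + replicate_mset q r) r (Suc u)) else 0)"
    by (rule sum.inter_filter) simp
  finally show ?thesis .
qed

lemma block_inv_count_top_below_Suc:
  assumes tr: "t \<le> r"
  shows "block_inv_count_top_below r (Suc m) (Suc q) t = (\<Sum>u<t. block_inv_count_top_below r m q (Suc u))"
proof -
  let ?c = "\<lambda>M u. card (block_involutions_below (M + replicate_mset q r) r (Suc u))"
  let ?S = "multisets_of_size {..<r} (Suc m)"
  have "block_inv_count_top_below r (Suc m) (Suc q) t
      = (\<Sum>M\<in>?S. \<Sum>u<t. if u \<in># M then ?c (M - {#u#}) u else 0)"
    unfolding block_inv_count_top_below_def
    using card_block_involutions_below_add_top[OF _ tr] by (intro sum.cong refl) (auto simp: multisets_of_size_def)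
  also have "\<dots> = (\<Sum>u<t. \<Sum>M\<in>?S. if u \<in># M then ?c (M - {#u#}) u else 0)"
    by (rule sum.swap)
  also have "\<dots> = (\<Sum>u<t. block_inv_count_top_below r m q (Suc u))"
  proof (rule sum.cong[OF refl])
    fix u assume u: "u \<in> {..<t}"
    have "(\<Sum>M\<in>?S. if u \<in># M then ?c (M - {#u#}) u else 0) = (\<Sum>M\<in>{M \<in> ?S. u \<in># M}. ?c (M - {#u#}) u)"
      by (rule sum.inter_filter[symmetric]) (simp add: finite_multisets_of_size)
    also have "\<dots> = (\<Sum>M\<in>multisets_of_size {..<r} m. ?c M u)"
      by (rule sum.reindex_bij_witness[where j = "\<lambda>M. M - {#u#}" and i = "add_mset u"])
        (use u tr in \<open>auto simp: multisets_of_size_def size_Diff_submset dest: in_diffD\<close>)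
    finally show "(\<Sum>M\<in>?S. if u \<in># M then ?c (M - {#u#}) u else 0) = block_inv_count_top_below r m q (Suc u)"
      by (simp add: block_inv_count_top_below_def)
  qed
  finally show ?thesis .
qed

lemma block_inv_count_top_below_only_top:
  assumes "t \<le> r"
  shows "block_inv_count_top_below r 0 (Suc q) t = 0"
proof -
  have "\<forall>x\<in>#replicate_mset (Suc q) r. x \<le> r" "r \<in># replicate_mset (Suc q) r" by simp_all
  from card_block_involutions_below_decomp[OF this assms] assms
  have "card (block_involutions_below (replicate_mset (Suc q) r) r t) = 0" by simp
  moreover have "multisets_of_size {..<r} 0 = {{#}}" by (auto simp: multisets_of_size_def)
  ultimately show ?thesis by (simp add: block_inv_count_top_below_def)
qed

lemma sum_choose_shift: "e \<le> n \<Longrightarrow> (\<Sum>x<r. (x + e) choose n) = (r + e) choose (Suc n)"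
  by (induction r) (simp_all add: add.commute)

text \<open>
  Each of the \<open>q\<close> top letters is paired with a letter below \<open>t\<close>; these partners form one of
  the \<open>binomial (q + t - 1) q\<close> multisets of size \<open>q\<close> on \<open>{..<t}\<close>.
\<close>

lemma block_inv_count_top_below_eq:
  assumes "t \<le> r"
  shows "block_inv_count_top_below r m q t
       = (if q \<le> m then block_inv_count (m - q) r * ((q + t - 1) choose q) else 0)"
  using assms
proof (induction q arbitrary: m t)
  case 0
  then show ?case by (simp add: block_inv_count_top_below_0)
next
  case (Suc q)
  show ?case
  proof (cases m)
    case 0
    then show ?thesis using block_inv_count_top_below_only_top[OF Suc.prems] by simp
  next
    case (Suc m')
    have "block_inv_count_top_below r m (Suc q) t = (\<Sum>u<t. block_inv_count_top_below r m' q (Suc u))"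
      using block_inv_count_top_below_Suc[OF Suc.prems] Suc by simp
    also have "\<dots> = (\<Sum>u<t. if q \<le> m' then block_inv_count (m' - q) r * ((u + q) choose q) else 0)"
      using Suc.IH Suc.prems by (intro sum.cong) (auto simp: add.commute)
    also have "\<dots> = (if q \<le> m' then block_inv_count (m' - q) r * ((t + q) choose (Suc q)) else 0)"
      by (simp add: sum_distrib_left[symmetric] sum_choose_shift)
    finally show ?thesis using Suc by (simp add: add.commute)
  qed
qed

lemma block_inv_count_Suc_Suc:
  "block_inv_count (Suc n) (Suc r)
     = block_inv_count n (Suc r) + (\<Sum>p\<le>Suc n. block_inv_count_top_below r (Suc n - p) p r)"
proof -
  have "block_inv_count (Suc n) (Suc r)
      = block_inv_count_top r (Suc n) 0 + (\<Sum>p\<le>n. block_inv_count_top r (n - p) (Suc p))"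
    unfolding block_inv_count_Suc_letters by (subst sum.atMost_Suc_shift) simp
  also have "\<dots> = block_inv_count n (Suc r)
      + (block_inv_count_top_below r (Suc n) 0 r + (\<Sum>p\<le>n. block_inv_count_top_below r (Suc n - Suc p) (Suc p) r))"
    by (simp add: block_inv_count_top_Suc sum.distrib block_inv_count_top_0 block_inv_count_top_below_0
        block_inv_count_Suc_letters)
  also have "block_inv_count_top_below r (Suc n) 0 r + (\<Sum>p\<le>n. block_inv_count_top_below r (Suc n - Suc p) (Suc p) r)
      = (\<Sum>p\<le>Suc n. block_inv_count_top_below r (Suc n - p) p r)"
    by (subst sum.atMost_Suc_shift) simp
  finally show ?thesis .
qed


section \<open>The generating function in the size\<close>

definition size_fps :: "nat \<Rightarrow> rat fps" where
  "size_fps r = Abs_fps (\<lambda>n. of_nat (block_inv_count n r))"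

definition recip_one_minus_X2_pow :: "nat \<Rightarrow> rat fps" where
  "recip_one_minus_X2_pow r =
     Abs_fps (\<lambda>k. if even k then of_nat ((k div 2 + r - 1) choose (k div 2)) else 0)"

lemma sum_even_indices:
  "(\<Sum>i=0..(N::nat). if even i then f i else (0::'a::comm_monoid_add)) = (\<Sum>p\<le>N div 2. f (2*p))"
proof -
  have "(\<Sum>i=0..N. if even i then f i else 0) = (\<Sum>i\<in>{i\<in>{0..N}. even i}. f i)"
    by (rule sum.inter_filter[symmetric]) simp
  also have "{i\<in>{0..N}. even i} = (\<lambda>p. 2*p) ` {..N div 2}"
    by (auto elim!: evenE)
  also have "(\<Sum>i\<in>(\<lambda>p. 2*p) ` {..N div 2}. f i) = (\<Sum>p\<le>N div 2. f (2*p))"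
    by (rule sum.reindex_cong[where l="\<lambda>p. 2*p"]) (auto simp: inj_on_def)
  finally show ?thesis .
qed

lemma sum_atMost_half:
  "(\<Sum>p\<le>(N::nat). if p \<le> N - p then g p else (0::'a::comm_monoid_add)) = (\<Sum>p\<le>N div 2. g p)"
proof -
  have "(\<Sum>p\<le>N. if p \<le> N - p then g p else 0) = (\<Sum>p\<in>{p\<in>{..N}. p \<le> N - p}. g p)"
    by (rule sum.inter_filter[symmetric]) simp
  also have "{p\<in>{..N}. p \<le> N - p} = {..N div 2}" by auto
  finally show ?thesis .
qed

lemma block_inv_count_diff:
  "block_inv_count N (Suc r)
     = (if N = 0 then 0 else block_inv_count (N - 1) (Suc r))
       + (\<Sum>p\<le>N. block_inv_count_top_below r (N - p) p r)"
proof (cases N)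
  case 0
  then show ?thesis
    by (simp add: block_inv_count_Suc_letters block_inv_count_top_0 block_inv_count_top_below_0)
next
  case (Suc n)
  then show ?thesis using block_inv_count_Suc_Suc by simp
qed

text \<open>
  Copies of the new top letter are fixed points, giving the factor \<open>1 / (1 - X)\<close>, or paired
  with smaller letters, giving \<open>1 / (1 - X\<^sup>2) ^ r\<close> by \<open>block_inv_count_top_below_eq\<close>.
\<close>

lemma size_fps_Suc: "(1 - fps_X) * size_fps (Suc r) = size_fps r * recip_one_minus_X2_pow r"
proof (rule fps_ext)
  fix N
  let ?T = "\<lambda>p. block_inv_count (N - p - p) r * ((p + r - 1) choose p)"
  have "(\<Sum>p\<le>N. block_inv_count_top_below r (N - p) p r) = (\<Sum>p\<le>N. if p \<le> N - p then ?T p else 0)"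
    by (intro sum.cong refl) (simp add: block_inv_count_top_below_eq)
  also have "\<dots> = (\<Sum>p\<le>N div 2. ?T p)"
    by (rule sum_atMost_half)
  finally have pairs: "(\<Sum>p\<le>N. block_inv_count_top_below r (N - p) p r) = (\<Sum>p\<le>N div 2. ?T p)" .
  have "(size_fps r * recip_one_minus_X2_pow r) $ N = (recip_one_minus_X2_pow r * size_fps r) $ N"
    by (simp add: mult.commute)
  also have "\<dots> = (\<Sum>i=0..N. if even i
      then of_nat ((i div 2 + r - 1) choose (i div 2)) * of_nat (block_inv_count (N - i) r) else 0)"
    by (auto simp: fps_mult_nth recip_one_minus_X2_pow_def size_fps_def intro!: sum.cong)
  also have "\<dots> = (\<Sum>p\<le>N div 2. of_nat ((p + r - 1) choose p) * of_nat (block_inv_count (N - 2 * p) r))"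
    by (subst sum_even_indices) simp
  also have "\<dots> = of_nat (\<Sum>p\<le>N div 2. ?T p)"
    unfolding of_nat_sum by (intro sum.cong refl) (simp add: mult_2)
  finally have "(size_fps r * recip_one_minus_X2_pow r) $ N
      = of_nat (\<Sum>p\<le>N. block_inv_count_top_below r (N - p) p r)"
    unfolding pairs .
  moreover have "((1 - fps_X) * size_fps (Suc r)) $ N
      = of_nat (block_inv_count N (Suc r))
        - (if N = 0 then 0 else of_nat (block_inv_count (N - 1) (Suc r)))"
    by (simp add: algebra_simps size_fps_def)
  ultimately show "((1 - fps_X) * size_fps (Suc r)) $ N = (size_fps r * recip_one_minus_X2_pow r) $ N"
    using block_inv_count_diff[of N r] by (simp split: if_splits)
qed

lemma fps_mult_one_minus_X2_nth:
  "(F * (1 - fps_X\<^sup>2)) $ k = F $ k - (if 2 \<le> k then F $ (k - 2) else (0 :: rat))"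
proof -
  have "F * (1 - fps_X\<^sup>2) = F - fps_X\<^sup>2 * F" by (simp add: algebra_simps)
  then show ?thesis by (simp add: fps_X_power_mult_nth)
qed

lemma recip_one_minus_X2_pow_0: "recip_one_minus_X2_pow 0 = 1"
proof (rule fps_ext)
  fix k
  show "recip_one_minus_X2_pow 0 $ k = 1 $ k"
    by (cases "k div 2") (auto simp: recip_one_minus_X2_pow_def elim!: evenE)
qed

lemma recip_one_minus_X2_pow_Suc:
  "recip_one_minus_X2_pow (Suc r) * (1 - fps_X\<^sup>2) = recip_one_minus_X2_pow r"
proof (rule fps_ext)
  fix k
  show "(recip_one_minus_X2_pow (Suc r) * (1 - fps_X\<^sup>2)) $ k = recip_one_minus_X2_pow r $ k"
  proof (cases "even k")
    case True
    then obtain p where k: "k = 2 * p" by (auto elim!: evenE)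
    show ?thesis
    proof (cases p)
      case 0
      then show ?thesis using k by (simp add: fps_mult_one_minus_X2_nth recip_one_minus_X2_pow_def)
    next
      case (Suc p')
      then have "k - 2 = 2 * p'" "(p + r choose p) = (p' + r choose p') + (p' + r choose p)"
        using k by simp_all
      then show ?thesis
        using k Suc by (simp add: fps_mult_one_minus_X2_nth recip_one_minus_X2_pow_def)
    qed
  next
    case False
    then show ?thesis by (simp add: fps_mult_one_minus_X2_nth recip_one_minus_X2_pow_def)
  qed
qed

lemma recip_one_minus_X2_pow_inverse: "recip_one_minus_X2_pow r * (1 - fps_X\<^sup>2) ^ r = 1"
proof (induction r)
  case 0
  then show ?case by (simp add: recip_one_minus_X2_pow_0)
next
  case (Suc r)
  have "recip_one_minus_X2_pow (Suc r) * (1 - fps_X\<^sup>2) ^ Suc r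
      = (recip_one_minus_X2_pow (Suc r) * (1 - fps_X\<^sup>2)) * (1 - fps_X\<^sup>2) ^ r"
    by (simp add: algebra_simps)
  also have "\<dots> = 1" using Suc by (simp add: recip_one_minus_X2_pow_Suc)
  finally show ?case .
qed

fun size_fps_denom :: "nat \<Rightarrow> rat fps" where
  "size_fps_denom 0 = 1"
| "size_fps_denom (Suc r) = (1 - fps_X) * (1 - fps_X\<^sup>2) ^ r * size_fps_denom r"

lemma size_fps_0: "size_fps 0 = 1"
  by (rule fps_ext) (simp add: size_fps_def block_inv_count_zero_letters)

lemma size_fps_mult_denom: "size_fps r * size_fps_denom r = 1"
proof (induction r)
  case 0
  then show ?case by (simp add: size_fps_0)
next
  case (Suc r)
  have "size_fps (Suc r) * size_fps_denom (Suc r)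
      = ((1 - fps_X) * size_fps (Suc r)) * ((1 - fps_X\<^sup>2) ^ r * size_fps_denom r)"
    by (simp add: algebra_simps)
  also have "\<dots> = size_fps r * (recip_one_minus_X2_pow r * (1 - fps_X\<^sup>2) ^ r) * size_fps_denom r"
    by (simp only: size_fps_Suc ac_simps)
  also have "\<dots> = 1" using Suc by (simp add: recip_one_minus_X2_pow_inverse)
  finally show ?case .
qed

lemma size_fps_denom_nth_0: "size_fps_denom r $ 0 = 1"
  by (induction r) (simp_all add: fps_power_zeroth)

lemma deriv_one_minus_X2_pow:
  "(1 - fps_X\<^sup>2) * fps_deriv ((1 - fps_X\<^sup>2) ^ r) = - of_nat (2 * r) * fps_X * ((1 - fps_X\<^sup>2) ^ r :: rat fps)"
proof (cases r)
  case (Suc r')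
  have d: "fps_deriv (1 - fps_X\<^sup>2 :: rat fps) = - 2 * fps_X"
    by (simp add: fps_deriv_power')
  have "fps_deriv ((1 - fps_X\<^sup>2) ^ r) = of_nat r * fps_deriv (1 - fps_X\<^sup>2) * ((1 - fps_X\<^sup>2) ^ r' :: rat fps)"
    using Suc by (simp only: fps_deriv_power') simp
  then have "(1 - fps_X\<^sup>2) * fps_deriv ((1 - fps_X\<^sup>2) ^ r)
      = of_nat r * (- 2 * fps_X) * ((1 - fps_X\<^sup>2) * (1 - fps_X\<^sup>2) ^ r' :: rat fps)"
    unfolding d by (simp only: ac_simps)
  also have "\<dots> = - of_nat (2 * r) * fps_X * ((1 - fps_X\<^sup>2) ^ r :: rat fps)"
    using Suc by (simp only: power_Suc[symmetric]) (simp add: algebra_simps)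
  finally show ?thesis .
qed simp

lemma size_fps_denom_ode:
  "(1 - fps_X\<^sup>2) * fps_deriv (size_fps_denom r) = - (of_nat r + of_nat (r * r) * fps_X) * size_fps_denom r"
proof (induction r)
  case (Suc r)
  define A where "A = ((1 - fps_X\<^sup>2) ^ r :: rat fps)"
  define Q where "Q = size_fps_denom r"
  have IH: "(1 - fps_X\<^sup>2) * fps_deriv Q = - (of_nat r + of_nat (r * r) * fps_X) * Q"
    using Suc by (simp add: Q_def)
  have dA: "(1 - fps_X\<^sup>2) * fps_deriv A = - of_nat (2 * r) * fps_X * A"
    using deriv_one_minus_X2_pow by (simp add: A_def)
  have e: "(1 - fps_X\<^sup>2 :: rat fps) = (1 - fps_X) * (1 + fps_X)"
    by (simp add: algebra_simps power2_eq_square)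
  have "(1 - fps_X\<^sup>2) * fps_deriv (size_fps_denom (Suc r))
      = (1 - fps_X) * A * ((1 - fps_X\<^sup>2) * fps_deriv Q) + (1 - fps_X) * ((1 - fps_X\<^sup>2) * fps_deriv A) * Q
        - (1 - fps_X\<^sup>2) * A * Q"
    by (simp add: A_def Q_def algebra_simps)
  also have "\<dots> = (1 - fps_X) * A * (- (of_nat r + of_nat (r * r) * fps_X) * Q)
       + (1 - fps_X) * (- of_nat (2 * r) * fps_X * A) * Q - ((1 - fps_X) * (1 + fps_X)) * A * Q"
    by (simp only: IH dA, simp only: e)
  also have "\<dots> = - (of_nat (Suc r) + of_nat (Suc r * Suc r) * fps_X) * ((1 - fps_X) * A * Q)"
    by (simp add: algebra_simps)
  finally show ?case by (simp add: A_def Q_def)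
qed simp

lemma size_fps_ode:
  "(1 - fps_X\<^sup>2) * fps_deriv (size_fps r) = (of_nat r + of_nat (r * r) * fps_X) * size_fps r"
proof -
  define c where "c = (of_nat r + of_nat (r * r) * fps_X :: rat fps)"
  have d: "size_fps r * fps_deriv (size_fps_denom r) + fps_deriv (size_fps r) * size_fps_denom r = 0"
    using arg_cong[OF size_fps_mult_denom[of r], of fps_deriv] by simp
  have "((1 - fps_X\<^sup>2) * fps_deriv (size_fps r) - c * size_fps r) * size_fps_denom r
      = (1 - fps_X\<^sup>2) * (size_fps r * fps_deriv (size_fps_denom r) + fps_deriv (size_fps r) * size_fps_denom r)
        - size_fps r * ((1 - fps_X\<^sup>2) * fps_deriv (size_fps_denom r)) - c * size_fps r * size_fps_denom r"
    by (simp add: algebra_simps)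
  also have "\<dots> = 0" unfolding d size_fps_denom_ode c_def by (simp add: algebra_simps)
  finally have "((1 - fps_X\<^sup>2) * fps_deriv (size_fps r) - c * size_fps r) * size_fps_denom r = 0" .
  moreover have "size_fps_denom r \<noteq> 0" using size_fps_denom_nth_0[of r] by auto
  ultimately show ?thesis by (simp add: c_def)
qed

lemma block_inv_count_recurrence:
  "(n + 2) * block_inv_count (n + 2) r = r * block_inv_count (n + 1) r + (r * r + n) * block_inv_count n r"
proof -
  have "((1 - fps_X\<^sup>2) * fps_deriv (size_fps r)) $ (n + 1)
      = ((of_nat r + of_nat (r * r) * fps_X) * size_fps r) $ (n + 1)"
    by (simp only: size_fps_ode)
  moreover have "((1 - fps_X\<^sup>2) * fps_deriv (size_fps r)) $ (n + 1)
      = of_nat (n + 2) * of_nat (block_inv_count (n + 2) r) - of_nat n * of_nat (block_inv_count n r)"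
  proof -
    have "(1 - fps_X\<^sup>2) * fps_deriv (size_fps r) = fps_deriv (size_fps r) - fps_X\<^sup>2 * fps_deriv (size_fps r)"
      by (simp add: algebra_simps)
    then show ?thesis by (cases n) (simp_all add: fps_X_power_mult_nth size_fps_def algebra_simps)
  qed
  moreover have "((of_nat r + of_nat (r * r) * fps_X) * size_fps r) $ (n + 1)
      = of_nat r * of_nat (block_inv_count (n + 1) r) + of_nat (r * r) * of_nat (block_inv_count n r)"
    by (simp add: algebra_simps size_fps_def fps_of_nat[symmetric])
  ultimately have "of_nat ((n + 2) * block_inv_count (n + 2) r)
      = (of_nat (r * block_inv_count (n + 1) r + (r * r + n) * block_inv_count n r) :: rat)"
    by (simp add: algebra_simps)
  then show ?thesis by (simp only: of_nat_eq_iff)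
qed

section \<open>Sorted words and descents\<close>

text \<open>
  Words are indexed from \<open>1\<close>; \<open>i \<in> D\<close> asks for a strict ascent from letter \<open>i\<close> to
  letter \<open>i + 1\<close>, which are \<open>ws ! (i - 1)\<close> and \<open>ws ! i\<close>.
\<close>

definition sorted_words :: "nat \<Rightarrow> nat \<Rightarrow> nat set \<Rightarrow> nat list set" where
  "sorted_words n r D =
     {ws. length ws = n \<and> sorted ws \<and> set ws \<subseteq> {..<r} \<and> (\<forall>i\<in>D. ws ! (i - 1) < ws ! i)}"

lemma finite_sorted_words: "finite (sorted_words n r D)"
proof -
  have "sorted_words n r D \<subseteq> {ws. set ws \<subseteq> {..<r} \<and> length ws = n}"
    by (auto simp: sorted_words_def)
  moreover have "finite {ws. set ws \<subseteq> {..<r} \<and> length ws = n}"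
    by (rule finite_lists_length_eq) simp
  ultimately show ?thesis by (rule finite_subset)
qed

lemma sorted_le_last:
  assumes "sorted ws" and "y \<in> set ws"
  shows "y \<le> ws ! (length ws - 1)"
proof -
  obtain i where "i < length ws" "ws ! i = y" using assms(2) by (auto simp: in_set_conv_nth)
  then show ?thesis using sorted_nth_mono[OF assms(1), of i "length ws - 1"] by simp
qed

lemma snoc_in_sorted_words_iff:
  assumes D: "D \<subseteq> {1..<Suc n}" and len: "length ws = n"
  shows "ws @ [x] \<in> sorted_words (Suc n) r D
     \<longleftrightarrow> x < r \<and> ws \<in> sorted_words n (if n \<in> D then x else Suc x) (D - {n})"
proof -
  have ascent_below: "(\<forall>i\<in>D - {n}. (ws @ [x]) ! (i - 1) < (ws @ [x]) ! i)
      \<longleftrightarrow> (\<forall>i\<in>D - {n}. ws ! (i - 1) < ws ! i)"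
    using D len by (intro ball_cong refl) (auto simp: nth_append)
  have ascent_top: "(ws @ [x]) ! (n - 1) < (ws @ [x]) ! n \<longleftrightarrow> ws ! (n - 1) < x" if "n \<in> D"
    using that D len by (auto simp: nth_append)
  have bound: "set ws \<subseteq> {..<(if n \<in> D then x else Suc x)}
      \<longleftrightarrow> (\<forall>y\<in>set ws. y \<le> x) \<and> (n \<in> D \<longrightarrow> ws ! (n - 1) < x)" if "sorted ws"
  proof (cases "n \<in> D")
    case True
    then have "ws ! (n - 1) \<in> set ws" using D len by auto
    then show ?thesis using True sorted_le_last[OF that] len by (auto intro: le_less_trans)
  qed (auto simp: less_Suc_eq_le)
  have "D = (D - {n}) \<union> (if n \<in> D then {n} else {})" by auto
  then have "(\<forall>i\<in>D. (ws @ [x]) ! (i - 1) < (ws @ [x]) ! i)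
      \<longleftrightarrow> (\<forall>i\<in>D - {n}. ws ! (i - 1) < ws ! i) \<and> (n \<in> D \<longrightarrow> ws ! (n - 1) < x)"
    using ascent_below ascent_top by blast
  then show ?thesis
    using len bound by (auto simp: sorted_words_def sorted_append)
qed

lemma sorted_words_Suc:
  assumes "D \<subseteq> {1..<Suc n}"
  shows "sorted_words (Suc n) r D
       = (\<Union>x<r. (\<lambda>ws. ws @ [x]) ` sorted_words n (if n \<in> D then x else Suc x) (D - {n}))"
proof (intro set_eqI iffI)
  fix vs assume vs: "vs \<in> sorted_words (Suc n) r D"
  then have "length vs = Suc n" by (simp add: sorted_words_def)
  then obtain ws x where "vs = ws @ [x]" "length ws = n"
    by (cases vs rule: rev_cases) auto
  with vs snoc_in_sorted_words_iff[OF assms] show "vs \<in> (\<Union>x<r. (\<lambda>ws. ws @ [x]) `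
      sorted_words n (if n \<in> D then x else Suc x) (D - {n}))"
    by blast
next
  fix vs assume "vs \<in> (\<Union>x<r. (\<lambda>ws. ws @ [x]) ` sorted_words n (if n \<in> D then x else Suc x) (D - {n}))"
  then obtain x ws where "x < r" "vs = ws @ [x]"
    and ws: "ws \<in> sorted_words n (if n \<in> D then x else Suc x) (D - {n})"
    by blast
  moreover have "length ws = n" using ws by (simp add: sorted_words_def)
  ultimately show "vs \<in> sorted_words (Suc n) r D"
    using snoc_in_sorted_words_iff[OF assms] ws by blast
qed

lemma card_sorted_words:
  assumes "D \<subseteq> {1..<n}"
  shows "card (sorted_words n r D) = (r + n - 1 - card D) choose n"
  using assms
proof (induction n arbitrary: r D)
  case 0
  then have "D = {}" by auto
  moreover have "sorted_words 0 r {} = {[]}" by (auto simp: sorted_words_def)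
  ultimately show ?case by simp
next
  case (Suc n)
  have fin: "finite D" using Suc.prems finite_subset by blast
  have "card D \<le> n" using card_mono[OF _ Suc.prems] by fastforce
  have card_D: "card (D - {n}) = (if n \<in> D then card D - 1 else card D)" using fin by simp
  have "0 < card D" if "n \<in> D" using that fin by (auto simp: card_gt_0_iff)
  have "card (sorted_words (Suc n) r D)
      = (\<Sum>x<r. card ((\<lambda>ws. ws @ [x]) ` sorted_words n (if n \<in> D then x else Suc x) (D - {n})))"
    unfolding sorted_words_Suc[OF Suc.prems]
    by (rule card_UN_disjoint) (auto simp: finite_sorted_words)
  also have "\<dots> = (\<Sum>x<r. card (sorted_words n (if n \<in> D then x else Suc x) (D - {n})))"
    by (intro sum.cong refl card_image) (auto simp: inj_on_def)
  also have "\<dots> = (\<Sum>x<r. ((if n \<in> D then x else Suc x) + n - 1 - card (D - {n})) choose n)"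
    using Suc.prems by (intro sum.cong refl Suc.IH) auto
  also have "\<dots> = (\<Sum>x<r. (x + (n - card D)) choose n)"
    using \<open>card D \<le> n\<close> \<open>n \<in> D \<Longrightarrow> 0 < card D\<close> card_D by (intro sum.cong refl) auto
  also have "\<dots> = (r + (n - card D)) choose (Suc n)"
    by (rule sum_choose_shift) simp
  also have "r + (n - card D) = r + Suc n - 1 - card D"
    using \<open>card D \<le> n\<close> by simp
  finally show ?case .
qed

lemma bij_betw_mset_sorted_words: "bij_betw mset (sorted_words n r {}) (multisets_of_size {..<r} n)"
proof (rule bij_betw_byWitness[where f' = sorted_list_of_multiset])
  show "\<forall>ws\<in>sorted_words n r {}. sorted_list_of_multiset (mset ws) = ws"
    by (auto simp: sorted_words_def sorted_sort_id)
  show "\<forall>M\<in>multisets_of_size {..<r} n. mset (sorted_list_of_multiset M) = M" by simp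
  show "mset ` sorted_words n r {} \<subseteq> multisets_of_size {..<r} n"
    by (auto simp: sorted_words_def multisets_of_size_def)
  have "length (sorted_list_of_multiset M) = size M" for M :: "nat multiset"
    by (metis mset_sorted_list_of_multiset size_mset)
  then show "sorted_list_of_multiset ` multisets_of_size {..<r} n \<subseteq> sorted_words n r {}"
    by (auto simp: sorted_words_def multisets_of_size_def)
qed

section \<open>Transport of block involutions to involutions of indices\<close>

definition increasing_on_fibres :: "'a::order set \<Rightarrow> ('a \<Rightarrow> 'b) \<Rightarrow> ('a \<Rightarrow> 'a) \<Rightarrow> bool" where
  "increasing_on_fibres S f p \<longleftrightarrow> (\<forall>x\<in>S. \<forall>y\<in>S. x < y \<and> f x = f y \<longrightarrow> p x < p y)"

lemma conjugate_increasing_involution: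
  fixes h :: "'a::order \<Rightarrow> 'b::order" and k :: "'b \<Rightarrow> 'a"
  assumes h: "\<And>x. x \<in> S \<Longrightarrow> h x \<in> P" and k: "\<And>y. y \<in> P \<Longrightarrow> k y \<in> S"
    and kh: "\<And>x. x \<in> S \<Longrightarrow> k (h x) = x" and hk: "\<And>y. y \<in> P \<Longrightarrow> h (k y) = y"
    and h_mono: "\<And>x z. x \<in> S \<Longrightarrow> z \<in> S \<Longrightarrow> x < z \<Longrightarrow> h x < h z"
    and k_mono: "\<And>y z. y \<in> P \<Longrightarrow> z \<in> P \<Longrightarrow> y < z \<Longrightarrow> k y < k z"
    and fibre: "\<And>y. y \<in> P \<Longrightarrow> f (k y) = g y"
    and inv: "involution_on S p" and inc: "increasing_on_fibres S f p"
  shows "involution_on P (\<lambda>y. if y \<in> P then h (p (k y)) else y)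
       \<and> increasing_on_fibres P g (\<lambda>y. if y \<in> P then h (p (k y)) else y)"
proof
  have pk: "p (k y) \<in> S" if "y \<in> P" for y using involution_onD(3)[OF inv k[OF that]] .
  show "involution_on P (\<lambda>y. if y \<in> P then h (p (k y)) else y)"
    by (rule involution_onI) (simp_all add: pk h kh involution_onD(2)[OF inv] hk)
  show "increasing_on_fibres P g (\<lambda>y. if y \<in> P then h (p (k y)) else y)"
    unfolding increasing_on_fibres_def
  proof (intro ballI impI)
    fix y z assume yz: "y \<in> P" "z \<in> P" "y < z \<and> g y = g z"
    then have "p (k y) < p (k z)"
      using inc k k_mono fibre unfolding increasing_on_fibres_def by metis
    then show "(if y \<in> P then h (p (k y)) else y) < (if z \<in> P then h (p (k z)) else z)"
      using yz pk h_mono by simp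
  qed
qed

lemma card_increasing_involutions_transport:
  fixes h :: "'a::linorder \<Rightarrow> 'b::linorder"
  assumes bij: "bij_betw h S P"
    and mono: "\<And>x y. x \<in> S \<Longrightarrow> y \<in> S \<Longrightarrow> x < y \<Longrightarrow> h x < h y"
    and fibre: "\<And>x. x \<in> S \<Longrightarrow> g (h x) = f x"
  shows "card {p. involution_on S p \<and> increasing_on_fibres S f p}
       = card {q. involution_on P q \<and> increasing_on_fibres P g q}"
proof -
  define k where "k = inv_into S h"
  have h: "\<And>x. x \<in> S \<Longrightarrow> h x \<in> P" using bij by (auto simp: bij_betw_def)
  have k: "\<And>y. y \<in> P \<Longrightarrow> k y \<in> S" using bij by (simp add: k_def bij_betw_def inv_into_into)
  have kh: "\<And>x. x \<in> S \<Longrightarrow> k (h x) = x" using bij by (simp add: k_def bij_betw_inv_into_left)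
  have hk: "\<And>y. y \<in> P \<Longrightarrow> h (k y) = y" using bij by (simp add: k_def bij_betw_inv_into_right)
  have k_mono: "k y < k z" if "y \<in> P" "z \<in> P" "y < z" for y z
    using mono[OF k[OF that(2)] k[OF that(1)]] that hk by (metis less_asym not_less_iff_gr_or_eq)
  have k_fibre: "f (k y) = g y" if "y \<in> P" for y
    using fibre[OF k[OF that]] hk[OF that] by simp
  define F where "F p = (\<lambda>y. if y \<in> P then h (p (k y)) else y)" for p
  define G where "G q = (\<lambda>x. if x \<in> S then k (q (h x)) else x)" for q
  have "bij_betw F {p. involution_on S p \<and> increasing_on_fibres S f p}
      {q. involution_on P q \<and> increasing_on_fibres P g q}"
  proof (rule bij_betw_byWitness[where f' = G])
    show "\<forall>p\<in>{p. involution_on S p \<and> increasing_on_fibres S f p}. G (F p) = p"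
      using involution_onD(1,3) h kh by (fastforce simp: F_def G_def)
    show "\<forall>q\<in>{q. involution_on P q \<and> increasing_on_fibres P g q}. F (G q) = q"
      using involution_onD(1,3) k hk by (fastforce simp: F_def G_def)
    show "F ` {p. involution_on S p \<and> increasing_on_fibres S f p}
        \<subseteq> {q. involution_on P q \<and> increasing_on_fibres P g q}"
      using conjugate_increasing_involution[where f = f and g = g, OF h k kh hk mono k_mono k_fibre]
      by (auto simp: F_def)
    show "G ` {q. involution_on P q \<and> increasing_on_fibres P g q}
        \<subseteq> {p. involution_on S p \<and> increasing_on_fibres S f p}"
      using conjugate_increasing_involution[where f = g and g = f, OF k h hk kh k_mono mono fibre]
      by (auto simp: G_def)
  qed
  then show ?thesis by (rule bij_betw_same_card)
qed

lemma block_involutions_eq_increasing_on_fibres: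
  "block_involutions M = {q. involution_on (positions M) q \<and> increasing_on_fibres (positions M) fst q}"
proof -
  have "increasing_on_blocks M q \<longleftrightarrow> increasing_on_fibres (positions M) fst q" for q
  proof
    assume inc: "increasing_on_blocks M q"
    show "increasing_on_fibres (positions M) fst q"
      unfolding increasing_on_fibres_def
    proof (intro ballI impI)
      fix x y assume xy: "x \<in> positions M" "y \<in> positions M" "x < y \<and> fst x = fst y"
      then obtain u i j where "x = (u, i)" "y = (u, j)" "i < j" "j < count M u"
        by (cases x, cases y) (auto simp: less_prod_def')
      with inc show "q x < q y" by (simp add: increasing_on_blocks_def)
    qed
  next
    assume inc: "increasing_on_fibres (positions M) fst q"
    show "increasing_on_blocks M q"
      unfolding increasing_on_blocks_def
    proof (intro allI impI)
      fix u i j assume "i < j" "j < count M u"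
      then have "(u, i) \<in> positions M" "(u, j) \<in> positions M" "(u, i) < (u, j)" by simp_all
      with inc show "q (u, i) < q (u, j)" unfolding increasing_on_fibres_def by auto
    qed
  qed
  then show ?thesis by (simp add: block_involutions_def)
qed

text \<open>
  Standardisation of a word: indices count from \<open>1\<close>, occurrences (as in \<open>positions\<close>)
  from \<open>0\<close>.
\<close>

definition position_of_index :: "nat list \<Rightarrow> nat \<Rightarrow> nat \<times> nat" where
  "position_of_index ws i = (ws ! (i - 1), card {j \<in> {1..<i}. ws ! (j - 1) = ws ! (i - 1)})"

lemma count_mset_eq_card_indices: "count (mset ws) u = card {j \<in> {1..length ws}. ws ! (j - 1) = u}"
proof -
  have "count (mset ws) u = card {i. i < length ws \<and> u = ws ! i}"
    by (simp add: count_mset count_list_eq_length_filter length_filter_conv_card)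
  also have "\<dots> = card (Suc ` {i. i < length ws \<and> u = ws ! i})"
    by (simp add: card_image)
  also have "Suc ` {i. i < length ws \<and> u = ws ! i} = {j \<in> {1..length ws}. ws ! (j - 1) = u}"
    by (auto simp: image_iff)
      (metis Suc_pred' One_nat_def diff_Suc_1 less_eq_Suc_le Suc_le_lessD not_less_eq_eq)
  finally show ?thesis .
qed

context
  fixes ws :: "nat list"
  assumes sorted: "sorted ws"
begin

lemma position_of_index_strict_mono:
  assumes "i \<in> {1..length ws}" "i' \<in> {1..length ws}" "i < i'"
  shows "position_of_index ws i < position_of_index ws i'"
proof (cases "ws ! (i - 1) = ws ! (i' - 1)")
  case True
  have "{j \<in> {1..<i}. ws ! (j - 1) = ws ! (i - 1)} \<subset> {j \<in> {1..<i'}. ws ! (j - 1) = ws ! (i' - 1)}"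
    using True assms by auto
  then have "card {j \<in> {1..<i}. ws ! (j - 1) = ws ! (i - 1)} < card {j \<in> {1..<i'}. ws ! (j - 1) = ws ! (i' - 1)}"
    by (rule psubset_card_mono[rotated]) simp
  then show ?thesis using True by (simp add: position_of_index_def less_prod_def')
next
  case False
  moreover have "ws ! (i - 1) \<le> ws ! (i' - 1)" using sorted assms by (simp add: sorted_nth_mono)
  ultimately show ?thesis by (simp add: position_of_index_def less_prod_def')
qed

lemma position_of_index_in_positions:
  assumes "i \<in> {1..length ws}"
  shows "position_of_index ws i \<in> positions (mset ws)"
proof -
  have "{j \<in> {1..<i}. ws ! (j - 1) = ws ! (i - 1)} \<subset> {j \<in> {1..length ws}. ws ! (j - 1) = ws ! (i - 1)}"
    using assms by auto
  then have "card {j \<in> {1..<i}. ws ! (j - 1) = ws ! (i - 1)}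
      < card {j \<in> {1..length ws}. ws ! (j - 1) = ws ! (i - 1)}"
    by (rule psubset_card_mono[rotated]) simp
  then show ?thesis by (simp add: position_of_index_def count_mset_eq_card_indices)
qed

lemma bij_betw_position_of_index: "bij_betw (position_of_index ws) {1..length ws} (positions (mset ws))"
proof -
  have inj: "inj_on (position_of_index ws) {1..length ws}"
    by (rule inj_onI) (metis linorder_neqE_nat order.irrefl position_of_index_strict_mono)
  moreover have "position_of_index ws ` {1..length ws} \<subseteq> positions (mset ws)"
    using position_of_index_in_positions by auto
  moreover have "card (position_of_index ws ` {1..length ws}) = card (positions (mset ws))"
    using card_image[OF inj] by (simp add: card_positions)
  ultimately show ?thesis
    by (simp add: bij_betw_def card_subset_eq finite_positions)
qed

end

lemma less_by_Suc_steps: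
  fixes f :: "nat \<Rightarrow> 'a::order"
  assumes "\<And>i. x \<le> i \<Longrightarrow> i < y \<Longrightarrow> f i < f (Suc i)" and "x < y"
  shows "f x < f y"
  using assms
proof (induction y)
  case (Suc y)
  then show ?case by (cases "x = y") (auto intro: order.strict_trans)
qed simp

lemma ascending_at_descents_iff_increasing_on_fibres:
  assumes sorted: "sorted ws" and len: "length ws = n" and p: "involution_on {1..n} p"
  shows "(\<forall>i\<in>descents n p. ws ! (i - 1) < ws ! i)
     \<longleftrightarrow> increasing_on_fibres {1..n} (\<lambda>i. ws ! (i - 1)) p"
proof
  assume asc: "\<forall>i\<in>descents n p. ws ! (i - 1) < ws ! i"
  show "increasing_on_fibres {1..n} (\<lambda>i. ws ! (i - 1)) p"
    unfolding increasing_on_fibres_def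
  proof (intro ballI impI)
    fix x y assume xy: "x \<in> {1..n}" "y \<in> {1..n}" "x < y \<and> ws ! (x - 1) = ws ! (y - 1)"
    have "p i < p (Suc i)" if i: "x \<le> i" "i < y" for i
    proof -
      have "ws ! (x - 1) \<le> ws ! (i - 1)" "ws ! (i - 1) \<le> ws ! i" "ws ! i \<le> ws ! (y - 1)"
        by (rule sorted_nth_mono[OF sorted]; use xy i len in simp)+
      then have "ws ! (i - 1) = ws ! i" using xy by simp
      moreover have "i \<in> {1..n - 1}" using xy i by auto
      ultimately have "\<not> p i > p (Suc i)" using asc by (auto simp: descents_def)
      moreover have "p i \<noteq> p (Suc i)" by (metis involution_onD(2)[OF p] n_not_Suc_n)
      ultimately show ?thesis by simp
    qed
    then show "p x < p y" using less_by_Suc_steps xy by blast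
  qed
next
  assume inc: "increasing_on_fibres {1..n} (\<lambda>i. ws ! (i - 1)) p"
  show "\<forall>i\<in>descents n p. ws ! (i - 1) < ws ! i"
  proof
    fix i assume "i \<in> descents n p"
    then have i: "i \<in> {1..n - 1}" and desc: "p (Suc i) < p i" by (auto simp: descents_def)
    have le: "ws ! (i - 1) \<le> ws ! i" using sorted len i by (auto intro: sorted_nth_mono)
    show "ws ! (i - 1) < ws ! i"
    proof (rule ccontr)
      assume "\<not> ws ! (i - 1) < ws ! i"
      then have "ws ! (i - 1) = ws ! (Suc i - 1)" using le by simp
      then have "p i < p (Suc i)" using inc i unfolding increasing_on_fibres_def by auto
      then show False using desc by simp
    qed
  qed
qed

lemma involutions_eq_involution_on: "involutions n = {p. involution_on {1..n} p}"
  by (simp add: involutions_def involution_on_iff_permutes)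

lemma card_involutions_ascending_at_descents:
  assumes "ws \<in> sorted_words n r {}"
  shows "card {p \<in> involutions n. \<forall>i\<in>descents n p. ws ! (i - 1) < ws ! i}
       = card (block_involutions (mset ws))"
proof -
  have sorted: "sorted ws" and len: "length ws = n" using assms by (auto simp: sorted_words_def)
  have "{p \<in> involutions n. \<forall>i\<in>descents n p. ws ! (i - 1) < ws ! i}
      = {p. involution_on {1..n} p \<and> increasing_on_fibres {1..n} (\<lambda>i. ws ! (i - 1)) p}"
    using ascending_at_descents_iff_increasing_on_fibres[OF sorted len]
    by (auto simp: involutions_eq_involution_on)
  also have "card \<dots> = card {q. involution_on (positions (mset ws)) q
      \<and> increasing_on_fibres (positions (mset ws)) fst q}"
  proof -
    have "fst (position_of_index ws i) = ws ! (i - 1)" for i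
      by (simp add: position_of_index_def)
    from card_increasing_involutions_transport[where g = fst and f = "\<lambda>i. ws ! (i - 1)",
        OF bij_betw_position_of_index[OF sorted] position_of_index_strict_mono[OF sorted] this]
    show ?thesis unfolding len .
  qed
  finally show ?thesis by (simp add: block_involutions_eq_increasing_on_fibres)
qed

lemma finite_involutions: "finite (involutions n)"
  using finite_permutations[of "{1..n}"] by (rule finite_subset[rotated]) (auto simp: involutions_def)

lemma descents_subset: "descents n p \<subseteq> {1..<n}"
  by (auto simp: descents_def)

lemma card_descents_le: "card (descents n p) \<le> n"
  using card_mono[OF _ descents_subset, of n p] by simp

lemma sum_card_filter_swap:
  assumes "finite A" "finite B"
  shows "(\<Sum>x\<in>A. card {y\<in>B. P x y}) = (\<Sum>y\<in>B. card {x\<in>A. P x y})"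
proof -
  have "(\<Sum>x\<in>A. card {y\<in>B. P x y}) = (\<Sum>x\<in>A. \<Sum>y\<in>B. if P x y then 1 else 0)"
    using assms by (simp add: sum.inter_filter[symmetric])
  also have "\<dots> = (\<Sum>y\<in>B. \<Sum>x\<in>A. if P x y then 1 else 0)" by (rule sum.swap)
  also have "\<dots> = (\<Sum>y\<in>B. card {x\<in>A. P x y})"
    using assms by (simp add: sum.inter_filter[symmetric])
  finally show ?thesis .
qed

text \<open>Double counting of pairs of a sorted word and an involution whose descents it ascends at.\<close>

lemma block_inv_count_eq_descent_sum:
  "block_inv_count n r = (\<Sum>k\<le>n. Inv n k * ((r + n - 1 - k) choose n))"
proof -
  let ?asc = "\<lambda>ws p. \<forall>i\<in>descents n p. ws ! (i - 1) < ws ! i"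
  have "block_inv_count n r = (\<Sum>ws\<in>sorted_words n r {}. card (block_involutions (mset ws)))"
    unfolding block_inv_count_def by (rule sum.reindex_bij_betw[OF bij_betw_mset_sorted_words, symmetric])
  also have "\<dots> = (\<Sum>ws\<in>sorted_words n r {}. card {p \<in> involutions n. ?asc ws p})"
    by (intro sum.cong refl card_involutions_ascending_at_descents[symmetric])
  also have "\<dots> = (\<Sum>p\<in>involutions n. card {ws \<in> sorted_words n r {}. ?asc ws p})"
    by (rule sum_card_filter_swap[OF finite_sorted_words finite_involutions])
  also have "\<dots> = (\<Sum>p\<in>involutions n. (r + n - 1 - card (descents n p)) choose n)"
  proof (intro sum.cong refl)
    fix p
    have "{ws \<in> sorted_words n r {}. ?asc ws p} = sorted_words n r (descents n p)"
      by (auto simp: sorted_words_def)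
    then show "card {ws \<in> sorted_words n r {}. ?asc ws p} = (r + n - 1 - card (descents n p)) choose n"
      by (simp add: card_sorted_words[OF descents_subset])
  qed
  also have "\<dots> = (\<Sum>k\<le>n. \<Sum>p\<in>{p \<in> involutions n. card (descents n p) = k}.
      (r + n - 1 - card (descents n p)) choose n)"
    by (rule sum.group[symmetric]) (auto simp: finite_involutions card_descents_le)
  also have "\<dots> = (\<Sum>k\<le>n. Inv n k * ((r + n - 1 - k) choose n))"
    by (intro sum.cong refl) (simp add: Inv_def)
  finally show ?thesis .
qed

section \<open>A recurrence for the descent polynomials of involutions\<close>

definition I_fps :: "nat \<Rightarrow> rat fps" where
  "I_fps n = Abs_fps (\<lambda>k. of_nat (Inv n k))"

definition colour_fps :: "nat \<Rightarrow> rat fps" where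
  "colour_fps n = Abs_fps (\<lambda>r. of_nat (block_inv_count n (Suc r)))"

definition neg_binomial_fps :: "nat \<Rightarrow> rat fps" where
  "neg_binomial_fps n = Abs_fps (\<lambda>r. of_nat ((r + n) choose n))"

definition shifted_euler :: "rat fps \<Rightarrow> rat fps" where
  "shifted_euler F = F + fps_X * fps_deriv F"

text \<open>\<open>shifted_euler\<close> conjugated by \<open>(1 - X) ^ m\<close>, see \<open>shifted_euler_mult_power\<close>.\<close>

definition conj_euler :: "nat \<Rightarrow> rat fps \<Rightarrow> rat fps" where
  "conj_euler m G = (1 - fps_X) * shifted_euler G + of_nat m * fps_X * G"

lemma shifted_euler_nth: "shifted_euler F $ r = of_nat (Suc r) * F $ r"
  by (cases r) (simp_all add: shifted_euler_def algebra_simps)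

lemma Inv_eq_0: "n < k \<Longrightarrow> Inv n k = 0"
  using card_descents_le[of n] unfolding Inv_def
  by (metis (mono_tags, lifting) card.empty empty_Collect_eq leD)

lemma fps_mult_one_minus_X_nth:
  "((F :: rat fps) * (1 - fps_X)) $ k = F $ k - (if k = 0 then 0 else F $ (k - 1 :: nat))"
proof -
  have "F * (1 - fps_X) = F - fps_X * F" by (simp add: algebra_simps)
  then show ?thesis by simp
qed

lemma colour_fps_eq: "colour_fps n = I_fps n * neg_binomial_fps n"
proof (rule fps_ext)
  fix r
  have "block_inv_count n (Suc r) = (\<Sum>k\<le>n. Inv n k * ((r + n - k) choose n))"
    using block_inv_count_eq_descent_sum[of n "Suc r"] by simp
  also have "\<dots> = (\<Sum>k\<le>n + r. Inv n k * ((r + n - k) choose n))"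
    by (rule sum.mono_neutral_left) (auto simp: Inv_eq_0)
  also have "\<dots> = (\<Sum>k\<le>r. Inv n k * ((r + n - k) choose n))"
    by (rule sum.mono_neutral_right) auto
  finally show "colour_fps n $ r = (I_fps n * neg_binomial_fps n) $ r"
    by (simp add: colour_fps_def fps_mult_nth I_fps_def neg_binomial_fps_def of_nat_sum
        atLeast0AtMost)
qed

lemma neg_binomial_fps_Suc: "neg_binomial_fps (Suc n) * (1 - fps_X) = neg_binomial_fps n"
proof (rule fps_ext)
  fix r
  show "(neg_binomial_fps (Suc n) * (1 - fps_X)) $ r = neg_binomial_fps n $ r"
    by (cases r) (simp_all add: fps_mult_one_minus_X_nth neg_binomial_fps_def)
qed

lemma neg_binomial_fps_inverse: "neg_binomial_fps n * (1 - fps_X) ^ Suc n = 1"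
proof (induction n)
  case 0
  have "neg_binomial_fps 0 * (1 - fps_X) = 1"
    by (rule fps_ext) (simp add: fps_mult_one_minus_X_nth neg_binomial_fps_def)
  then show ?case by simp
next
  case (Suc n)
  have "neg_binomial_fps (Suc n) * (1 - fps_X) ^ Suc (Suc n)
      = (neg_binomial_fps (Suc n) * (1 - fps_X)) * (1 - fps_X) ^ Suc n"
    by (simp only: power_Suc ac_simps)
  then show ?case by (simp only: neg_binomial_fps_Suc Suc.IH)
qed

lemma colour_fps_mult_power: "colour_fps n * (1 - fps_X) ^ Suc n = I_fps n"
proof -
  have "colour_fps n * (1 - fps_X) ^ Suc n = I_fps n * (neg_binomial_fps n * (1 - fps_X) ^ Suc n)"
    by (simp add: colour_fps_eq ac_simps)
  then show ?thesis by (simp only: neg_binomial_fps_inverse mult_1_right)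
qed

lemma colour_fps_recurrence:
  "of_nat (m + 2) * colour_fps (m + 2)
     = shifted_euler (colour_fps (m + 1)) + shifted_euler (shifted_euler (colour_fps m))
       + of_nat m * colour_fps m"
proof (rule fps_ext)
  fix r
  have "of_nat ((m + 2) * block_inv_count (m + 2) (Suc r))
      = (of_nat (Suc r * block_inv_count (m + 1) (Suc r) + (Suc r * Suc r + m) * block_inv_count m (Suc r))
          :: rat)"
    by (simp only: block_inv_count_recurrence)
  then show "(of_nat (m + 2) * colour_fps (m + 2)) $ r
      = (shifted_euler (colour_fps (m + 1)) + shifted_euler (shifted_euler (colour_fps m))
         + of_nat m * colour_fps m) $ r"
    by (simp add: colour_fps_def shifted_euler_nth fps_of_nat[symmetric] algebra_simps)
qed

lemma shifted_euler_mult_power: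
  "shifted_euler F * (1 - fps_X) ^ Suc m = conj_euler m (F * (1 - fps_X) ^ m)"
proof -
  have d: "fps_deriv ((1 - fps_X) ^ m :: rat fps) * (1 - fps_X) = - of_nat m * (1 - fps_X) ^ m"
  proof (cases m)
    case (Suc m')
    then have "fps_deriv ((1 - fps_X) ^ m :: rat fps) = - of_nat m * (1 - fps_X) ^ m'"
      by (simp only: fps_deriv_power') simp
    then show ?thesis using Suc by (simp add: ac_simps)
  qed simp
  have "conj_euler m (F * (1 - fps_X) ^ m)
      = (1 - fps_X) * (F * (1 - fps_X) ^ m) + fps_X * fps_deriv F * (1 - fps_X) ^ m * (1 - fps_X)
        + fps_X * F * (fps_deriv ((1 - fps_X) ^ m) * (1 - fps_X))
        + of_nat m * fps_X * (F * (1 - fps_X) ^ m)"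
    by (simp add: conj_euler_def shifted_euler_def algebra_simps)
  also have "\<dots> = shifted_euler F * (1 - fps_X) ^ Suc m"
    unfolding d shifted_euler_def by (simp add: algebra_simps)
  finally show ?thesis by simp
qed

theorem I_fps_recurrence:
  "of_nat (m + 2) * I_fps (m + 2)
     = conj_euler (m + 2) (I_fps (m + 1)) + conj_euler (m + 2) (conj_euler (m + 1) (I_fps m))
       + of_nat m * (1 - fps_X)\<^sup>2 * I_fps m"
proof -
  have "of_nat (m + 2) * I_fps (m + 2) = (of_nat (m + 2) * colour_fps (m + 2)) * (1 - fps_X) ^ Suc (m + 2)"
    by (simp add: colour_fps_mult_power[symmetric] ac_simps)
  also have "\<dots> = shifted_euler (colour_fps (m + 1)) * (1 - fps_X) ^ Suc (m + 2)
      + shifted_euler (shifted_euler (colour_fps m)) * (1 - fps_X) ^ Suc (m + 2)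
      + of_nat m * (colour_fps m * (1 - fps_X) ^ Suc m) * (1 - fps_X)\<^sup>2"
    unfolding colour_fps_recurrence by (simp add: algebra_simps power_add[symmetric])
  also have "shifted_euler (colour_fps (m + 1)) * (1 - fps_X) ^ Suc (m + 2) = conj_euler (m + 2) (I_fps (m + 1))"
    using shifted_euler_mult_power[of "colour_fps (m + 1)" "m + 2"] colour_fps_mult_power[of "m + 1"]
    by simp
  also have "shifted_euler (shifted_euler (colour_fps m)) * (1 - fps_X) ^ Suc (m + 2)
      = conj_euler (m + 2) (conj_euler (m + 1) (I_fps m))"
    using shifted_euler_mult_power[of "shifted_euler (colour_fps m)" "m + 2"]
      shifted_euler_mult_power[of "colour_fps m" "m + 1"] colour_fps_mult_power[of m]
    by simp
  finally show ?thesis by (simp only: colour_fps_mult_power ac_simps)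
qed

lemma I_fps_0: "I_fps 0 = 1"
proof -
  have "{p \<in> involutions 0. card (descents 0 p) = k} = (if k = 0 then {id} else {})" for k
    by (auto simp: involutions_def descents_def)
  then show ?thesis by (intro fps_ext) (simp add: I_fps_def Inv_def)
qed

lemma I_fps_1: "I_fps (Suc 0) = 1"
proof -
  have "{p \<in> involutions 1. card (descents 1 p) = k} = (if k = 0 then {id} else {})" for k
    by (auto simp: involutions_def descents_def)
  then show ?thesis by (intro fps_ext) (simp add: I_fps_def Inv_def)
qed

lemma I_fps_2: "I_fps 2 = 1 + fps_X"
proof -
  have "of_nat 2 * I_fps 2 = conj_euler 2 (I_fps 1) + conj_euler 2 (conj_euler 1 (I_fps 0))"
    using I_fps_recurrence[of 0] by (simp add: numeral_2_eq_2)
  also have "\<dots> = of_nat 2 * (1 + fps_X)"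
    by (simp add: I_fps_0 I_fps_1 conj_euler_def shifted_euler_def algebra_simps)
  finally show ?thesis
    by (metis mult_cancel_left of_nat_eq_0_iff zero_neq_numeral)
qed

section \<open>Gamma expansions\<close>

definition gamma_basis :: "nat \<Rightarrow> nat \<Rightarrow> rat fps" where
  "gamma_basis n k = fps_X ^ k * (1 + fps_X) ^ (n - 1 - 2 * k)"

definition gamma_expansion :: "nat \<Rightarrow> (int \<Rightarrow> rat) \<Rightarrow> rat fps" where
  "gamma_expansion n c = (\<Sum>k<n. fps_const (c (int k)) * gamma_basis n k)"

lemma gamma_expansion_add:
  "gamma_expansion n (\<lambda>k. c k + d k) = gamma_expansion n c + gamma_expansion n d"
  unfolding gamma_expansion_def fps_const_add[symmetric] distrib_right sum.distrib ..

lemma gamma_expansion_scale: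
  "gamma_expansion n (\<lambda>k. s * c k) = fps_const s * gamma_expansion n c"
  unfolding gamma_expansion_def fps_const_mult[symmetric] sum_distrib_left mult.assoc ..

lemma gamma_expansion_cong:
  "(\<And>k. 0 \<le> k \<Longrightarrow> c k = d k) \<Longrightarrow> gamma_expansion n c = gamma_expansion n d"
  by (simp add: gamma_expansion_def)

lemma fps_X_deriv_gamma_term:
  "fps_X * fps_deriv (fps_X ^ k * (1 + fps_X) ^ e :: rat fps)
     = of_nat k * (fps_X ^ k * (1 + fps_X) ^ e) + of_nat e * (fps_X * fps_X ^ k) * (1 + fps_X) ^ (e - 1)"
proof -
  have Xk: "fps_X * fps_deriv (fps_X ^ k :: rat fps) = of_nat k * fps_X ^ k"
  proof (cases k)
    case (Suc k')
    then have "fps_deriv (fps_X ^ k :: rat fps) = of_nat k * fps_X ^ k'"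
      by (simp only: fps_deriv_power') simp
    then show ?thesis using Suc by (simp add: algebra_simps)
  qed simp
  have "fps_X * fps_deriv (fps_X ^ k * (1 + fps_X) ^ e :: rat fps)
      = (fps_X * fps_deriv (fps_X ^ k)) * (1 + fps_X) ^ e + fps_X * fps_X ^ k * fps_deriv ((1 + fps_X) ^ e)"
    by (simp add: algebra_simps)
  also have "\<dots> = of_nat k * (fps_X ^ k * (1 + fps_X) ^ e) + of_nat e * (fps_X * fps_X ^ k) * (1 + fps_X) ^ (e - 1)"
    using fps_deriv_power'[of "1 + fps_X :: rat fps" e] by (simp only: Xk) (simp add: algebra_simps)
  finally show ?thesis .
qed

lemma conj_euler_gamma_basis:
  assumes "2 * k + 2 \<le> m"
  shows "conj_euler m (gamma_basis (m - 1) k)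
       = of_int (int k + 1) * gamma_basis m k + of_int (2 * int m - 4 * int k - 4) * gamma_basis m (k + 1)"
proof -
  obtain e where m: "m = 2 * k + 2 + e" using assms by (metis le_Suc_ex)
  have b1: "gamma_basis (m - 1) k = fps_X ^ k * (1 + fps_X) ^ e" using m by (simp add: gamma_basis_def)
  have b2: "gamma_basis m k = fps_X ^ k * (1 + fps_X) ^ Suc e" using m by (simp add: gamma_basis_def)
  have b3: "gamma_basis m (k + 1) = (fps_X * fps_X ^ k) * (1 + fps_X) ^ (e - 1)"
    using m by (simp add: gamma_basis_def)
  have c: "2 * int m - 4 * int k - 4 = 2 * int e" using m by simp
  have u: "conj_euler m (gamma_basis (m - 1) k)
      = (1 - fps_X) * (fps_X ^ k * (1 + fps_X) ^ e + of_nat k * (fps_X ^ k * (1 + fps_X) ^ e)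
         + of_nat e * (fps_X * fps_X ^ k) * (1 + fps_X) ^ (e - 1))
        + of_nat m * fps_X * (fps_X ^ k * (1 + fps_X) ^ e)"
    unfolding conj_euler_def shifted_euler_def b1 fps_X_deriv_gamma_term by (simp only: add.assoc)
  show ?thesis
    unfolding u b2 b3 c using m by (cases e) (simp_all add: algebra_simps)
qed

lemma conj_euler_add: "conj_euler m (F + G) = conj_euler m F + conj_euler m G"
  by (simp add: conj_euler_def shifted_euler_def algebra_simps)

lemma conj_euler_cmult: "fps_deriv C = 0 \<Longrightarrow> conj_euler m (C * F) = C * conj_euler m F"
  by (simp add: conj_euler_def shifted_euler_def algebra_simps)

lemma conj_euler_sum: "conj_euler m (\<Sum>k\<in>A. f k) = (\<Sum>k\<in>A. conj_euler m (f k))"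
  by (induction A rule: infinite_finite_induct)
    (simp_all add: conj_euler_add, simp_all add: conj_euler_def shifted_euler_def)

lemma one_minus_X_sq_gamma_basis:
  assumes "2 * k + 3 \<le> n"
  shows "(1 - fps_X)\<^sup>2 * gamma_basis (n - 2) k = gamma_basis n k - 4 * gamma_basis n (k + 1)"
proof -
  have "n - 1 - 2 * k = Suc (Suc (n - 2 - 1 - 2 * k))" using assms by simp
  then have "gamma_basis n k = (1 + fps_X)\<^sup>2 * gamma_basis (n - 2) k"
    by (simp add: gamma_basis_def algebra_simps power2_eq_square)
  moreover have "gamma_basis n (k + 1) = fps_X * gamma_basis (n - 2) k"
    by (simp add: gamma_basis_def algebra_simps)
  ultimately show ?thesis by (simp add: algebra_simps power2_eq_square)
qed

lemma conj_euler2_gamma_basis: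
  assumes "2 * k + 3 \<le> n"
  shows "conj_euler n (conj_euler (n - 1) (gamma_basis (n - 2) k))
         + of_nat (n - 2) * (1 - fps_X)\<^sup>2 * gamma_basis (n - 2) k
       = of_int (int k * (int k + 2) + int n - 1) * gamma_basis n k
         + of_int (int k * (4 * int n - 8 * int k - 22) + 2 * int n - 8) * gamma_basis n (k + 1)
         + of_int (4 * (int n - 2 * int k - 4) * (int n - 2 * int k - 3)) * gamma_basis n (k + 2)"
proof -
  let ?c = "2 * int n - 4 * int k - 6 :: int"
  have "conj_euler (n - 1) (gamma_basis (n - 1 - 1) k)
      = of_int (int k + 1) * gamma_basis (n - 1) k
        + of_int (2 * int (n - 1) - 4 * int k - 4) * gamma_basis (n - 1) (k + 1)"
    by (rule conj_euler_gamma_basis) (use assms in arith)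
  moreover have "n - 1 - 1 = n - 2" "2 * int (n - 1) - 4 * int k - 4 = ?c" using assms by auto
  ultimately have inner: "conj_euler (n - 1) (gamma_basis (n - 2) k)
      = of_int (int k + 1) * gamma_basis (n - 1) k + of_int ?c * gamma_basis (n - 1) (k + 1)"
    by simp
  have outer0: "conj_euler n (gamma_basis (n - 1) k)
      = of_int (int k + 1) * gamma_basis n k + of_int (2 * int n - 4 * int k - 4) * gamma_basis n (k + 1)"
    by (rule conj_euler_gamma_basis) (use assms in arith)
  have outer1: "of_int ?c * conj_euler n (gamma_basis (n - 1) (k + 1))
      = of_int ?c * (of_int (int k + 2) * gamma_basis n (k + 1)
          + of_int (2 * int n - 4 * int k - 8) * gamma_basis n (k + 2))"
  proof (cases "2 * k + 4 \<le> n")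
    case True
    have e: "conj_euler n (gamma_basis (n - 1) (k + 1))
        = of_int (int (k + 1) + 1) * gamma_basis n (k + 1)
          + of_int (2 * int n - 4 * int (k + 1) - 4) * gamma_basis n (k + 1 + 1)"
      by (rule conj_euler_gamma_basis) (use True in arith)
    show ?thesis unfolding e by (simp add: algebra_simps)
  next
    case False
    then have "?c = 0" using assms by simp
    then show ?thesis by simp
  qed
  have s4: "of_nat (n - 2) * (1 - fps_X)\<^sup>2 * gamma_basis (n - 2) k
      = of_int (int n - 2) * (gamma_basis n k - 4 * gamma_basis n (k + 1))"
    using assms unfolding mult.assoc one_minus_X_sq_gamma_basis[OF assms] by (simp add: of_nat_diff)
  have "conj_euler n (conj_euler (n - 1) (gamma_basis (n - 2) k))
        + of_nat (n - 2) * (1 - fps_X)\<^sup>2 * gamma_basis (n - 2) k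
      = of_int (int k + 1) * conj_euler n (gamma_basis (n - 1) k)
        + of_int ?c * conj_euler n (gamma_basis (n - 1) (k + 1))
        + of_int (int n - 2) * (gamma_basis n k - 4 * gamma_basis n (k + 1))"
    unfolding inner s4 by (simp add: conj_euler_add conj_euler_cmult)
  also have "\<dots> = of_int (int k * (int k + 2) + int n - 1) * gamma_basis n k
         + of_int (int k * (4 * int n - 8 * int k - 22) + 2 * int n - 8) * gamma_basis n (k + 1)
         + of_int (4 * (int n - 2 * int k - 4) * (int n - 2 * int k - 3)) * gamma_basis n (k + 2)"
    unfolding outer0 outer1 by (simp add: algebra_simps)
  finally show ?thesis .
qed

definition recurrence_rhs :: "nat \<Rightarrow> int \<Rightarrow> (nat \<Rightarrow> int \<Rightarrow> rat) \<Rightarrow> rat" where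
  "recurrence_rhs n k f =
       of_int (k + 1) * f (n - 1) k
     + of_int (2 * int n - 4 * k) * f (n - 1) (k - 1)
     + of_int (k * (k + 2) + int n - 1) * f (n - 2) k
     + of_int ((k - 1) * (4 * int n - 8 * k - 14) + 2 * int n - 8) * f (n - 2) (k - 1)
     + of_int (4 * (int n - 2 * k) * (int n - 2 * k + 1)) * f (n - 2) (k - 2)"

text \<open>
  The recurrence of the theorem, solved for its left-hand side, with the initial values of
  \<open>I_fps 1 = 1\<close> and \<open>I_fps 2 = 1 + X\<close>.
\<close>

fun gamma_coeff :: "nat \<Rightarrow> int \<Rightarrow> rat" where
  "gamma_coeff 0 k = 0"
| "gamma_coeff (Suc 0) k = (if k = 0 then 1 else 0)"
| "gamma_coeff (Suc (Suc 0)) k = (if k = 0 then 1 else 0)"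
| "gamma_coeff (Suc (Suc (Suc m))) k = (if k < 0 \<or> 2 * k > int m + 2 then 0 else
    (of_int (k + 1) * gamma_coeff (Suc (Suc m)) k
    + of_int (2 * (int m + 3) - 4 * k) * gamma_coeff (Suc (Suc m)) (k - 1)
    + of_int (k * (k + 2) + (int m + 3) - 1) * gamma_coeff (Suc m) k
    + of_int ((k - 1) * (4 * (int m + 3) - 8 * k - 14) + 2 * (int m + 3) - 8) * gamma_coeff (Suc m) (k - 1)
    + of_int (4 * ((int m + 3) - 2 * k) * ((int m + 3) - 2 * k + 1)) * gamma_coeff (Suc m) (k - 2))
    / of_nat (m + 3))"

lemma gamma_coeff_nonzero: "gamma_coeff n k \<noteq> 0 \<Longrightarrow> 0 \<le> k \<and> 2 * k < int n"
  by (induction n k rule: gamma_coeff.induct) (auto split: if_splits)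

lemma gamma_coeff_eq_0: "k < 0 \<or> int n \<le> 2 * k \<Longrightarrow> gamma_coeff n k = 0"
  using gamma_coeff_nonzero by fastforce

lemma recurrence_rhs_gamma_coeff_eq_0:
  assumes "int n \<le> 2 * k"
  shows "recurrence_rhs n k gamma_coeff = 0"
proof -
  have z2: "of_int (2 * int n - 4 * k) * gamma_coeff (n - 1) (k - 1) = 0"
    using assms gamma_coeff_nonzero[of "n - 1" "k - 1"] by force
  have z5: "of_int (4 * (int n - 2 * k) * (int n - 2 * k + 1)) * gamma_coeff (n - 2) (k - 2) = 0"
  proof (cases "gamma_coeff (n - 2) (k - 2) = 0")
    case False
    then have supp: "0 \<le> k - 2" "2 * (k - 2) < int (n - 2)"
      using gamma_coeff_nonzero[of "n - 2" "k - 2"] by auto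
    then have "2 \<le> n" by (cases "2 \<le> n") auto
    then have "int n - 2 * k = 0 \<or> int n - 2 * k + 1 = 0"
      using assms supp by (simp add: of_nat_diff) linarith
    then show ?thesis by auto
  qed simp
  have "int (n - 1) \<le> int n" "int (n - 2) = (if 2 \<le> n then int n - 2 else 0)" by auto
  then have "gamma_coeff (n - 1) k = 0" "gamma_coeff (n - 2) k = 0" "gamma_coeff (n - 2) (k - 1) = 0"
    using assms by (auto intro!: gamma_coeff_eq_0 split: if_splits)
  then show ?thesis
    unfolding recurrence_rhs_def z2 z5 by simp
qed

lemma gamma_coeff_recurrence:
  assumes n: "3 \<le> n" and k: "0 \<le> k"
  shows "of_nat n * gamma_coeff n k = recurrence_rhs n k gamma_coeff"
proof (cases "int n \<le> 2 * k")
  case True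
  then show ?thesis by (simp add: gamma_coeff_eq_0 recurrence_rhs_gamma_coeff_eq_0)
next
  case False
  define m where "m = n - 3"
  then have m: "n = Suc (Suc (Suc m))" using n by simp
  have "gamma_coeff (Suc (Suc (Suc m))) k
      = recurrence_rhs (Suc (Suc (Suc m))) k gamma_coeff / of_nat (Suc (Suc (Suc m)))"
    using False k unfolding m
    by (simp add: recurrence_rhs_def del: gamma_coeff.simps(1,2,3)) (simp add: algebra_simps)
  then show ?thesis unfolding m by simp
qed

lemma fps_const_of_int_mult: "fps_const (of_int z * x) = of_int z * fps_const x"
  by (simp flip: fps_of_int)

lemma sum_lessThan_shift_vanishing:
  fixes F :: "nat \<Rightarrow> 'a::comm_monoid_add"
  assumes "\<And>k. k < d \<Longrightarrow> F k = 0"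
  shows "(\<Sum>k<m + d. F k) = (\<Sum>k<m. F (k + d))"
proof -
  have "(\<Sum>k<m + d. F k) = (\<Sum>k<d. F k) + (\<Sum>k\<in>{d..<m + d}. F k)"
    by (simp add: lessThan_atLeast0 sum.atLeastLessThan_concat)
  also have "(\<Sum>k<d. F k) = 0" using assms by simp
  also have "(\<Sum>k\<in>{d..<m + d}. F k) = (\<Sum>k<m. F (k + d))"
    using sum.shift_bounds_nat_ivl[of F 0 d m] by (simp add: lessThan_atLeast0 add.commute)
  finally show ?thesis by simp
qed

lemma gamma_expansion_shift:
  assumes supp: "\<And>k. c k \<noteq> 0 \<Longrightarrow> 0 \<le> k \<and> k < int m" and "m + d \<le> n"
  shows "gamma_expansion n (\<lambda>k. w k * c (k - int d))
       = (\<Sum>k<m. fps_const (w (int k + int d) * c (int k)) * gamma_basis n (k + d))"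
proof -
  let ?F = "\<lambda>k. fps_const (w (int k) * c (int k - int d)) * gamma_basis n k"
  have vanish: "c (int k - int d) = 0" if "k < d \<or> m + d \<le> k" for k
    using supp[of "int k - int d"] that by (cases "c (int k - int d) = 0") auto
  have "gamma_expansion n (\<lambda>k. w k * c (k - int d)) = (\<Sum>k<m + d. ?F k)"
    unfolding gamma_expansion_def using assms(2) vanish by (intro sum.mono_neutral_right) auto
  also have "\<dots> = (\<Sum>k<m. ?F (k + d))"
    using vanish by (intro sum_lessThan_shift_vanishing) simp
  finally show ?thesis by simp
qed

lemma conj_euler_gamma_expansion:
  assumes supp: "\<And>k. c k \<noteq> 0 \<Longrightarrow> 0 \<le> k \<and> 2 * k < int (n - 1)" and n: "1 \<le> n"
  shows "conj_euler n (gamma_expansion (n - 1) c)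
       = gamma_expansion n (\<lambda>k. of_int (k + 1) * c k)
         + gamma_expansion n (\<lambda>k. of_int (2 * int n - 4 * k) * c (k - 1))"
proof -
  let ?B = "gamma_basis n"
  have supp': "0 \<le> k \<and> k < int (n - 1)" if "c k \<noteq> 0" for k
    using supp[OF that] by linarith
  have each: "fps_const (c (int k)) * conj_euler n (gamma_basis (n - 1) k)
      = fps_const (of_int (int k + 1) * c (int k)) * ?B k
        + fps_const (of_int (2 * int n - 4 * (int k + 1)) * c (int k)) * ?B (k + 1)" for k
  proof (cases "c (int k) = 0")
    case False
    then have k: "2 * k + 2 \<le> n" using supp by fastforce
    show ?thesis
      unfolding conj_euler_gamma_basis[OF k] fps_const_of_int_mult by (simp add: algebra_simps)
  qed simp
  have "conj_euler n (gamma_expansion (n - 1) c)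
      = (\<Sum>k<n - 1. fps_const (c (int k)) * conj_euler n (gamma_basis (n - 1) k))"
    by (simp add: gamma_expansion_def conj_euler_sum conj_euler_cmult)
  also have "\<dots> = (\<Sum>k<n - 1. fps_const (of_int (int k + 1) * c (int k)) * ?B k)
        + (\<Sum>k<n - 1. fps_const (of_int (2 * int n - 4 * (int k + 1)) * c (int k)) * ?B (k + 1))"
    unfolding each sum.distrib ..
  also have "\<dots> = gamma_expansion n (\<lambda>k. of_int (k + 1) * c (k - int 0))
      + gamma_expansion n (\<lambda>k. of_int (2 * int n - 4 * k) * c (k - int 1))"
    using gamma_expansion_shift[where c = c and m = "n - 1" and d = 0 and n = n
        and w = "\<lambda>k. of_int (k + 1)", OF supp']
      gamma_expansion_shift[where c = c and m = "n - 1" and d = 1 and n = n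
        and w = "\<lambda>k. of_int (2 * int n - 4 * k)", OF supp'] n
    by (simp add: algebra_simps)
  finally show ?thesis by simp
qed

lemma conj_euler2_gamma_expansion:
  assumes supp: "\<And>k. c k \<noteq> 0 \<Longrightarrow> 0 \<le> k \<and> 2 * k < int (n - 2)" and n: "2 \<le> n"
  shows "conj_euler n (conj_euler (n - 1) (gamma_expansion (n - 2) c))
         + of_nat (n - 2) * (1 - fps_X)\<^sup>2 * gamma_expansion (n - 2) c
       = gamma_expansion n (\<lambda>k. of_int (k * (k + 2) + int n - 1) * c k)
         + gamma_expansion n (\<lambda>k. of_int ((k - 1) * (4 * int n - 8 * k - 14) + 2 * int n - 8) * c (k - 1))
         + gamma_expansion n (\<lambda>k. of_int (4 * (int n - 2 * k) * (int n - 2 * k + 1)) * c (k - 2))"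
proof -
  let ?B = "gamma_basis n"
  let ?a = "\<lambda>k::int. k * (k + 2) + int n - 1"
  let ?b = "\<lambda>k::int. (k - 1) * (4 * int n - 8 * k - 14) + 2 * int n - 8"
  let ?e = "\<lambda>k::int. 4 * (int n - 2 * k) * (int n - 2 * k + 1)"
  have supp': "0 \<le> k \<and> k < int (n - 2)" if "c k \<noteq> 0" for k
    using supp[OF that] by linarith
  have each: "fps_const (c (int k)) * (conj_euler n (conj_euler (n - 1) (gamma_basis (n - 2) k))
        + of_nat (n - 2) * (1 - fps_X)\<^sup>2 * gamma_basis (n - 2) k)
      = fps_const (of_int (?a (int k)) * c (int k)) * ?B k
        + fps_const (of_int (?b (int k + 1)) * c (int k)) * ?B (k + 1)
        + fps_const (of_int (?e (int k + 2)) * c (int k)) * ?B (k + 2)" for k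
  proof (cases "c (int k) = 0")
    case False
    then have k: "2 * k + 3 \<le> n" using supp by fastforce
    show ?thesis
      unfolding conj_euler2_gamma_basis[OF k] fps_const_of_int_mult by (simp add: algebra_simps)
  qed simp
  have "conj_euler n (conj_euler (n - 1) (gamma_expansion (n - 2) c))
      = (\<Sum>k<n - 2. fps_const (c (int k)) * conj_euler n (conj_euler (n - 1) (gamma_basis (n - 2) k)))"
    by (simp add: gamma_expansion_def conj_euler_sum conj_euler_cmult)
  moreover have "of_nat (n - 2) * (1 - fps_X)\<^sup>2 * gamma_expansion (n - 2) c
      = (\<Sum>k<n - 2. fps_const (c (int k)) * (of_nat (n - 2) * (1 - fps_X)\<^sup>2 * gamma_basis (n - 2) k))"
    by (simp add: gamma_expansion_def sum_distrib_left ac_simps)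
  ultimately have "conj_euler n (conj_euler (n - 1) (gamma_expansion (n - 2) c))
        + of_nat (n - 2) * (1 - fps_X)\<^sup>2 * gamma_expansion (n - 2) c
      = (\<Sum>k<n - 2. fps_const (of_int (?a (int k)) * c (int k)) * ?B k)
        + (\<Sum>k<n - 2. fps_const (of_int (?b (int k + 1)) * c (int k)) * ?B (k + 1))
        + (\<Sum>k<n - 2. fps_const (of_int (?e (int k + 2)) * c (int k)) * ?B (k + 2))"
    by (simp only: distrib_left[symmetric] sum.distrib[symmetric] each)
  also have "\<dots> = gamma_expansion n (\<lambda>k. of_int (?a k) * c (k - int 0))
      + gamma_expansion n (\<lambda>k. of_int (?b k) * c (k - int 1))
      + gamma_expansion n (\<lambda>k. of_int (?e k) * c (k - int 2))"
    using gamma_expansion_shift[where c = c and m = "n - 2" and d = 0 and n = n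
        and w = "\<lambda>k. of_int (?a k)", OF supp']
      gamma_expansion_shift[where c = c and m = "n - 2" and d = 1 and n = n
        and w = "\<lambda>k. of_int (?b k)", OF supp']
      gamma_expansion_shift[where c = c and m = "n - 2" and d = 2 and n = n
        and w = "\<lambda>k. of_int (?e k)", OF supp'] n
    by simp
  finally show ?thesis by simp
qed

lemma gamma_expansion_gamma_coeff_recurrence:
  assumes n: "3 \<le> n"
  shows "of_nat n * gamma_expansion n (gamma_coeff n)
       = conj_euler n (gamma_expansion (n - 1) (gamma_coeff (n - 1)))
         + conj_euler n (conj_euler (n - 1) (gamma_expansion (n - 2) (gamma_coeff (n - 2))))
         + of_nat (n - 2) * (1 - fps_X)\<^sup>2 * gamma_expansion (n - 2) (gamma_coeff (n - 2))"
proof -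
  have "of_nat n * gamma_expansion n (gamma_coeff n) = gamma_expansion n (\<lambda>k. of_nat n * gamma_coeff n k)"
    by (simp add: gamma_expansion_scale fps_of_nat)
  also have "\<dots> = gamma_expansion n (\<lambda>k. recurrence_rhs n k gamma_coeff)"
    using gamma_coeff_recurrence[OF n] by (rule gamma_expansion_cong)
  also have "\<dots> = conj_euler n (gamma_expansion (n - 1) (gamma_coeff (n - 1)))
      + (conj_euler n (conj_euler (n - 1) (gamma_expansion (n - 2) (gamma_coeff (n - 2))))
         + of_nat (n - 2) * (1 - fps_X)\<^sup>2 * gamma_expansion (n - 2) (gamma_coeff (n - 2)))"
  proof -
    have "conj_euler n (gamma_expansion (n - 1) (gamma_coeff (n - 1)))
        = gamma_expansion n (\<lambda>k. of_int (k + 1) * gamma_coeff (n - 1) k)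
          + gamma_expansion n (\<lambda>k. of_int (2 * int n - 4 * k) * gamma_coeff (n - 1) (k - 1))"
      using n by (intro conj_euler_gamma_expansion gamma_coeff_nonzero) simp_all
    moreover have "conj_euler n (conj_euler (n - 1) (gamma_expansion (n - 2) (gamma_coeff (n - 2))))
          + of_nat (n - 2) * (1 - fps_X)\<^sup>2 * gamma_expansion (n - 2) (gamma_coeff (n - 2))
        = gamma_expansion n (\<lambda>k. of_int (k * (k + 2) + int n - 1) * gamma_coeff (n - 2) k)
          + gamma_expansion n (\<lambda>k. of_int ((k - 1) * (4 * int n - 8 * k - 14) + 2 * int n - 8)
              * gamma_coeff (n - 2) (k - 1))
          + gamma_expansion n (\<lambda>k. of_int (4 * (int n - 2 * k) * (int n - 2 * k + 1))
              * gamma_coeff (n - 2) (k - 2))"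
      using n by (intro conj_euler2_gamma_expansion gamma_coeff_nonzero) simp_all
    ultimately show ?thesis
      unfolding recurrence_rhs_def gamma_expansion_add by (simp only: add.assoc)
  qed
  finally show ?thesis by (simp only: add.assoc)
qed

theorem I_fps_eq_gamma_expansion: "1 \<le> n \<Longrightarrow> I_fps n = gamma_expansion n (gamma_coeff n)"
proof (induction n rule: less_induct)
  case (less n)
  consider "n = 1" | "n = 2" | "3 \<le> n" using less.prems by linarith
  then show ?case
  proof cases
    case 1
    then show ?thesis by (simp add: I_fps_1 gamma_expansion_def gamma_basis_def)
  next
    case 2
    have "{..<2::nat} = {0, 1}" "gamma_coeff 2 0 = 1" "gamma_coeff 2 1 = 0"
      by (auto simp: numeral_2_eq_2)
    then show ?thesis
      using 2 by (simp add: I_fps_2 gamma_expansion_def gamma_basis_def)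
  next
    case 3
    then have "of_nat n * I_fps n
        = conj_euler n (I_fps (n - 1)) + conj_euler n (conj_euler (n - 1) (I_fps (n - 2)))
          + of_nat (n - 2) * (1 - fps_X)\<^sup>2 * I_fps (n - 2)"
      using I_fps_recurrence[of "n - 2"] by (simp add: numeral_2_eq_2 Suc_diff_Suc)
    also have "\<dots> = of_nat n * gamma_expansion n (gamma_coeff n)"
      using 3 less.IH[of "n - 1"] less.IH[of "n - 2"]
      by (simp add: gamma_expansion_gamma_coeff_recurrence)
    finally show ?thesis using 3 by simp
  qed
qed

section \<open>Inverting the gamma expansion\<close>

lemma one_plus_X_power_nth: "((1 + fps_X) ^ e :: rat fps) $ j = of_nat (e choose j)"
  by (simp add: fps_binomial_of_nat[symmetric] binomial_gbinomial)

lemma gamma_basis_nth: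
  "gamma_basis n l $ i = (if i < l then 0 else of_nat ((n - 1 - 2 * l) choose (i - l)))"
  by (simp add: gamma_basis_def fps_X_power_mult_nth one_plus_X_power_nth)

lemma Inv_eq_sum_gamma_coeff:
  assumes "1 \<le> n"
  shows "of_nat (Inv n i) = (\<Sum>l<n. gamma_coeff n (int l) * gamma_basis n l $ i)"
proof -
  have "of_nat (Inv n i) = I_fps n $ i" by (simp add: I_fps_def)
  also have "\<dots> = (\<Sum>l<n. gamma_coeff n (int l) * gamma_basis n l $ i)"
    by (simp add: I_fps_eq_gamma_expansion[OF assms] gamma_expansion_def fps_sum_nth)
  finally show ?thesis .
qed

text \<open>
  \<open>inverse_weight M s\<close> equals \<open>(M + 2 s) / (M + s) * binomial (M + s) s\<close>, the weight in
  \<open>term_a\<close> (see \<open>inverse_weight_eq_ratio\<close>).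
\<close>

definition inverse_weight :: "nat \<Rightarrow> nat \<Rightarrow> rat" where
  "inverse_weight M s =
     (if s = 0 then 1 else of_nat ((M + s) choose s) + of_nat ((M + s - 1) choose (s - 1)))"

definition alt_neg_binomial_fps :: "nat \<Rightarrow> rat fps" where
  "alt_neg_binomial_fps M = Abs_fps (\<lambda>s. (- 1) ^ s * of_nat ((M + s) choose s))"

lemma fps_mult_one_plus_X_nth:
  "((F :: rat fps) * (1 + fps_X)) $ k = F $ k + (if k = 0 then 0 else F $ (k - 1))"
proof -
  have "F * (1 + fps_X) = F + fps_X * F" by (simp add: algebra_simps)
  then show ?thesis by simp
qed

lemma alt_neg_binomial_fps_Suc: "alt_neg_binomial_fps (Suc M) * (1 + fps_X) = alt_neg_binomial_fps M"
proof (rule fps_ext)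
  fix s
  show "(alt_neg_binomial_fps (Suc M) * (1 + fps_X)) $ s = alt_neg_binomial_fps M $ s"
  proof (cases s)
    case (Suc s')
    have "(Suc M + Suc s') choose Suc s' = ((M + Suc s') choose Suc s') + ((Suc M + s') choose s')"
      by simp
    then show ?thesis using Suc by (simp add: alt_neg_binomial_fps_def fps_mult_one_plus_X_nth algebra_simps)
  qed (simp add: alt_neg_binomial_fps_def fps_mult_one_plus_X_nth)
qed

lemma alt_neg_binomial_fps_inverse: "alt_neg_binomial_fps M * (1 + fps_X) ^ Suc M = 1"
proof (induction M)
  case 0
  have "alt_neg_binomial_fps 0 * (1 + fps_X) = 1"
  proof (rule fps_ext)
    fix s
    show "(alt_neg_binomial_fps 0 * (1 + fps_X)) $ s = 1 $ s"
      by (cases s) (simp_all add: alt_neg_binomial_fps_def fps_mult_one_plus_X_nth)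
  qed
  then show ?case by simp
next
  case (Suc M)
  have "alt_neg_binomial_fps (Suc M) * (1 + fps_X) ^ Suc (Suc M)
      = (alt_neg_binomial_fps (Suc M) * (1 + fps_X)) * (1 + fps_X) ^ Suc M"
    by (simp only: power_Suc ac_simps)
  then show ?case by (simp only: alt_neg_binomial_fps_Suc Suc.IH)
qed

lemma inverse_weight_fps:
  "Abs_fps (\<lambda>s. (- 1) ^ s * inverse_weight M s) = alt_neg_binomial_fps M * (1 - fps_X)"
proof (rule fps_ext)
  fix s
  show "Abs_fps (\<lambda>s. (- 1) ^ s * inverse_weight M s) $ s = (alt_neg_binomial_fps M * (1 - fps_X)) $ s"
    by (cases s) (simp_all add: alt_neg_binomial_fps_def inverse_weight_def fps_mult_one_minus_X_nth
        algebra_simps)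
qed

text \<open>The coefficient of \<open>X ^ p\<close> in \<open>(1 + X) ^ (M + 2 p) (1 - X) / (1 + X) ^ (M + 1)\<close>.\<close>

lemma sum_choose_inverse_weight:
  "(\<Sum>q\<le>p. of_nat ((M + 2 * p) choose q) * ((- 1) ^ (p - q) * inverse_weight M (p - q)))
     = (if p = 0 then 1 else (0 :: rat))"
proof (cases p)
  case 0
  then show ?thesis by (simp add: inverse_weight_def)
next
  case (Suc p')
  have "(\<Sum>q\<le>p. of_nat ((M + 2 * p) choose q) * ((- 1) ^ (p - q) * inverse_weight M (p - q)))
      = ((1 + fps_X) ^ (M + 2 * p) * Abs_fps (\<lambda>s. (- 1) ^ s * inverse_weight M s)) $ p"
    by (simp add: fps_mult_nth one_plus_X_power_nth atLeast0AtMost)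
  also have "(1 + fps_X) ^ (M + 2 * p) * Abs_fps (\<lambda>s. (- 1) ^ s * inverse_weight M s)
      = ((1 + fps_X) ^ (2 * p' + 1) * (1 - fps_X)) * (alt_neg_binomial_fps M * (1 + fps_X) ^ Suc M)"
  proof -
    have "M + 2 * p = (2 * p' + 1) + Suc M" using Suc by simp
    then show ?thesis by (simp only: power_add inverse_weight_fps) (simp only: ac_simps)
  qed
  also have "\<dots> = (1 + fps_X) ^ (2 * p' + 1) * (1 - fps_X)"
    by (simp only: alt_neg_binomial_fps_inverse mult_1_right)
  also have "\<dots> $ p = 0"
  proof -
    have "(2 * p' + 1) choose p = (2 * p' + 1) choose p'"
      using Suc binomial_symmetric[of p' "2 * p' + 1"] by simp
    then show ?thesis
      unfolding fps_mult_one_minus_X_nth one_plus_X_power_nth using Suc by simp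
  qed
  finally show ?thesis using Suc by simp
qed

definition gamma_inverse_coeff :: "nat \<Rightarrow> nat \<Rightarrow> nat \<Rightarrow> rat" where
  "gamma_inverse_coeff n j i = (- 1) ^ (j - i) * inverse_weight (n - 1 - 2 * j) (j - i)"

lemma gamma_inverse_coeff_orthogonal:
  assumes jn: "2 * j + 1 \<le> n"
  shows "(\<Sum>i\<le>j. gamma_inverse_coeff n j i * gamma_basis n l $ i) = (if l = j then 1 else 0)"
proof (cases "l \<le> j")
  case False
  then show ?thesis by (simp add: gamma_basis_nth)
next
  case lj: True
  define p where "p = j - l"
  define M where "M = n - 1 - 2 * j"
  have j: "j = p + l" using lj by (simp add: p_def)
  have "(\<Sum>i\<le>j. gamma_inverse_coeff n j i * gamma_basis n l $ i)
      = (\<Sum>i\<in>{l..j}. gamma_inverse_coeff n j i * gamma_basis n l $ i)"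
    by (rule sum.mono_neutral_right) (auto simp: gamma_basis_nth)
  also have "\<dots> = (\<Sum>q\<in>{0..p}. gamma_inverse_coeff n j (q + l) * gamma_basis n l $ (q + l))"
    using sum.shift_bounds_cl_nat_ivl[of "\<lambda>i. gamma_inverse_coeff n j i * gamma_basis n l $ i" 0 l p] j
    by simp
  also have "\<dots> = (\<Sum>q\<le>p. of_nat ((M + 2 * p) choose q) * ((- 1) ^ (p - q) * inverse_weight M (p - q)))"
  proof (rule sum.cong)
    fix q assume q: "q \<in> {..p}"
    have "j - (q + l) = p - q" using j q by simp
    moreover have "n - Suc (2 * l) = M + 2 * p" using lj jn by (simp add: p_def M_def)
    ultimately show "gamma_inverse_coeff n j (q + l) * gamma_basis n l $ (q + l)
        = of_nat ((M + 2 * p) choose q) * ((- 1) ^ (p - q) * inverse_weight M (p - q))"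
      by (simp add: gamma_inverse_coeff_def gamma_basis_nth M_def)
  qed auto
  also have "\<dots> = (if p = 0 then 1 else 0)" by (rule sum_choose_inverse_weight)
  finally show ?thesis using lj by (auto simp: p_def)
qed

lemma inverse_weight_eq_ratio:
  assumes "0 < s"
  shows "inverse_weight M s = of_nat (M + 2 * s) / of_nat (M + s) * of_nat ((M + s) choose s)"
proof -
  have "s * ((M + s) choose s) = (M + s) * ((M + s - 1) choose (s - 1))"
    using times_binomial_minus1_eq[of s "M + s"] assms by simp
  then have "(M + 2 * s) * ((M + s) choose s) = (M + s) * (((M + s) choose s) + ((M + s - 1) choose (s - 1)))"
    by (simp add: algebra_simps)
  then have "(of_nat ((M + 2 * s) * ((M + s) choose s)) :: rat)
      = of_nat ((M + s) * (((M + s) choose s) + ((M + s - 1) choose (s - 1))))"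
    by (simp only:)
  then have "of_nat (M + 2 * s) * of_nat ((M + s) choose s) = (of_nat (M + s) * inverse_weight M s :: rat)"
    using assms unfolding inverse_weight_def by simp
  moreover have "(of_nat (M + s) :: rat) \<noteq> 0" using assms by simp
  ultimately show ?thesis by (simp add: field_simps)
qed

lemma term_a_eq_gamma_inverse_coeff:
  assumes "i < j" and "2 * j + 1 \<le> m"
  shows "term_a m j i = gamma_inverse_coeff m j i * of_nat (Inv m i)"
proof -
  define s M where "s = j - i" and "M = m - 1 - 2 * j"
  have "m - 2 * i - 1 = M + 2 * s" "m - j - i - 1 = M + s" "j - i = s" "m - 1 - 2 * j = M" "0 < s"
    using assms by (simp_all add: s_def M_def)
  then show ?thesis
    unfolding term_a_def gamma_inverse_coeff_def by (simp add: inverse_weight_eq_ratio)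
qed

lemma term_a_diag: "2 * j + 1 < m \<Longrightarrow> term_a m j j = of_nat (Inv m j)"
  by (simp add: term_a_def)

lemma a_nat_eq_sum_gamma_inverse_coeff:
  assumes "2 * j + 1 \<le> n"
  shows "a_nat n j = (\<Sum>i\<le>j. gamma_inverse_coeff n j i * of_nat (Inv n i))"
proof -
  have "(\<Sum>i\<le>j. gamma_inverse_coeff n j i * of_nat (Inv n i))
      = (\<Sum>i<j. term_a n j i) + of_nat (Inv n j)"
    using assms by (simp add: lessThan_Suc_atMost[symmetric] term_a_eq_gamma_inverse_coeff
        gamma_inverse_coeff_def inverse_weight_def)
  moreover have "a_nat n j = (\<Sum>i<j. term_a n j i) + of_nat (Inv n j)"
    using assms by (cases "2 * j + 1 < n")
      (simp_all add: a_nat_def atLeast0AtMost atLeast0LessThan lessThan_Suc_atMost[symmetric] term_a_diag)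
  ultimately show ?thesis by simp
qed

lemma a_eq_gamma_coeff:
  assumes n: "1 \<le> n"
  shows "a n k = gamma_coeff n k"
proof (cases "k < 0 \<or> int n \<le> 2 * k")
  case True
  then show ?thesis by (auto simp: a_def a_nat_def gamma_coeff_eq_0)
next
  case False
  define j where "j = nat k"
  then have k: "k = int j" and j: "2 * j + 1 \<le> n" using False by auto
  have "a_nat n j = (\<Sum>i\<le>j. gamma_inverse_coeff n j i * (\<Sum>l<n. gamma_coeff n (int l) * gamma_basis n l $ i))"
    unfolding a_nat_eq_sum_gamma_inverse_coeff[OF j] Inv_eq_sum_gamma_coeff[OF n] ..
  also have "\<dots> = (\<Sum>i\<le>j. \<Sum>l<n. gamma_coeff n (int l) * (gamma_inverse_coeff n j i * gamma_basis n l $ i))"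
    by (simp only: sum_distrib_left mult.left_commute)
  also have "\<dots> = (\<Sum>l<n. \<Sum>i\<le>j. gamma_coeff n (int l) * (gamma_inverse_coeff n j i * gamma_basis n l $ i))"
    by (rule sum.swap)
  also have "\<dots> = (\<Sum>l<n. gamma_coeff n (int l) * (if l = j then 1 else 0))"
    by (simp only: sum_distrib_left[symmetric] gamma_inverse_coeff_orthogonal[OF j])
  also have "\<dots> = gamma_coeff n (int j)"
    using j by (simp add: if_distrib cong: if_cong)
  finally show ?thesis by (simp add: a_def k)
qed

theorem theorem4p2:
  fixes n :: nat and k :: int
  assumes "n \<ge> 3" and "k \<ge> 0"
  shows "of_nat n * a n k =
      of_int (k + 1) * a (n - 1) k
    + of_int (2 * int n - 4 * k) * a (n - 1) (k - 1)
    + of_int (k * (k + 2) + int n - 1) * a (n - 2) k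
    + of_int ((k - 1) * (4 * int n - 8 * k - 14) + 2 * int n - 8) * a (n - 2) (k - 1)
    + of_int (4 * (int n - 2 * k) * (int n - 2 * k + 1)) * a (n - 2) (k - 2)"
proof -
  have a: "a m = gamma_coeff m" if "1 \<le> m" for m
    using a_eq_gamma_coeff[OF that] by blast
  have "of_nat n * a n k = recurrence_rhs n k gamma_coeff"
    using gamma_coeff_recurrence[OF assms] a[of n] assms(1) by simp
  also have "\<dots> = recurrence_rhs n k a"
    using a[of "n - 1"] a[of "n - 2"] assms(1) by (simp add: recurrence_rhs_def)
  finally show ?thesis unfolding recurrence_rhs_def .
qed

end
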